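(* Let $T>0$ and let $\Gamma$ satisfy Assumption (A). Let $v\in\mathbb{R}^d$, $F\in C([0,T],\mathbb{R}^d)$, $G\in C([0,T],\mathcal{M}_d(\mathbb{R}))$ with $v_i\ge0$, $F_i\ge0$ and $G_{ij}\ge0$ for all $i,j\in\{1,\dots,d\}$ with $i\ne j$. Then the linear Volterra equation $\chi(t)=v+\int_0^t\Gamma(t,s)\big(F(s)+G(s)\chi(s)\big)\mathrm{d}s$ has a unique solution $\chi\in C([0,T],\mathbb{R}^d)$, and $\chi_i\ge0$ for $i=1,\dots,d$.
   Context: $\Delta=\{(t,s):0\le s\le t\}$, $\Delta_T=\{(t,s):0\le s\le t\le T\}$. Condition (K): for every $T$ there exist $\eta>0$, $\gamma\in(0,1/2]$ with $\int_s^t\Gamma(t,u)^2\mathrm{d}u+\int_0^s(\Gamma(t,u)-\Gamma(s,u))^2\mathrm{d}u\le\eta(t-s)^{2\gamma}$ on $\Delta_T$. A kernel preserves nonnegativity if for every $T$, $K$, $x_1,\dots,x_K\in\mathbb{R}$, $0\le t_1<\dots<t_K<T$ with $\sum_{k'\le k}x_{k'}\Gamma(t_k,t_{k'})\ge0$ for all $k$, one has $\sum_{k:t_k\le t}x_k\Gamma(t,t_k)\ge0$ for $t\in[0,T]$. Condition (P): $\Gamma:\Delta\to\mathbb{R}_+$ continuous, $0<\Gamma(s,s)<\infty$, preserves nonnegativity, $t\mapsto\Gamma(t,s)$ nonincreasing on $[s,\infty)$. Assumption (A): $\Gamma:\Delta\to\mathbb{R}_+$ satisfies (K) and there exist kernels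 $\Gamma_M$ satisfying (P) with $\int_0^t(\Gamma(t,s)-\Gamma_M(t,s))^2\mathrm{d}s\to0$ for all $t$ and, for each $T$, $\eta>0,\gamma\in(0,1/2]$ with $\int_s^t\Gamma_M(t,u)^2\mathrm{d}u+\int_0^s(\Gamma_M(t,u)-\Gamma_M(s,u))^2\mathrm{d}u\le\eta|t-s|^{2\gamma}$ on $\Delta_T$ for all $M$. *)

theory Defs
  imports "HOL-Analysis.Analysis"
begin

text \<open>Kernels are functions \<open>\<Gamma> :: real \<Rightarrow> real \<Rightarrow> real\<close>; only the values on
  \<open>\<Delta> = {(t,s). 0 \<le> s \<and> s \<le> t}\<close> matter.\<close>

definition Delta :: "(real \<times> real) set" where
  "Delta = {(t, s). 0 \<le> s \<and> s \<le> t}"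

definition cond_K :: "(real \<Rightarrow> real \<Rightarrow> real) \<Rightarrow> bool" where
  "cond_K \<Gamma> \<longleftrightarrow>
    (\<forall>T. \<exists>\<eta>::real. \<exists>\<gamma>::real. \<eta> > 0 \<and> 0 < \<gamma> \<and> \<gamma> \<le> 1/2 \<and>
      (\<forall>s t. 0 \<le> s \<and> s \<le> t \<and> t \<le> T \<longrightarrow>
         (\<integral>\<^sup>+ u\<in>{s..t}. ennreal ((\<Gamma> t u)\<^sup>2) \<partial>lborel)
       + (\<integral>\<^sup>+ u\<in>{0..s}. ennreal ((\<Gamma> t u - \<Gamma> s u)\<^sup>2) \<partial>lborel)
         \<le> ennreal (\<eta> * (t - s) powr (2 * \<gamma>))))"

definition preserves_nonneg :: "(real \<Rightarrow> real \<Rightarrow> real) \<Rightarrow> bool" where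
  "preserves_nonneg \<Gamma> \<longleftrightarrow>
    (\<forall>T (K::nat) (x::nat \<Rightarrow> real) (tt::nat \<Rightarrow> real).
       (\<forall>k<K. 0 \<le> tt k \<and> tt k < T) \<and> (\<forall>k. Suc k < K \<longrightarrow> tt k < tt (Suc k)) \<and>
       (\<forall>k<K. 0 \<le> (\<Sum>k'\<le>k. x k' * \<Gamma> (tt k) (tt k')))
       \<longrightarrow> (\<forall>t\<in>{0..T}. 0 \<le> (\<Sum>k\<in>{k. k < K \<and> tt k \<le> t}. x k * \<Gamma> t (tt k))))"

definition cond_P :: "(real \<Rightarrow> real \<Rightarrow> real) \<Rightarrow> bool" where
  "cond_P \<Gamma> \<longleftrightarrow>
    continuous_on Delta (\<lambda>(t, s). \<Gamma> t s) \<and>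
    (\<forall>(t, s)\<in>Delta. 0 \<le> \<Gamma> t s) \<and>
    (\<forall>s\<ge>0. 0 < \<Gamma> s s) \<and>
    preserves_nonneg \<Gamma> \<and>
    (\<forall>s t1 t2. 0 \<le> s \<and> s \<le> t1 \<and> t1 \<le> t2 \<longrightarrow> \<Gamma> t2 s \<le> \<Gamma> t1 s)"

text \<open>Assumption (A).  Measurability of \<open>\<Gamma>(t,\<cdot>)\<close> on \<open>[0,t]\<close> is implicit in the paper.\<close>
definition assumption_A :: "(real \<Rightarrow> real \<Rightarrow> real) \<Rightarrow> bool" where
  "assumption_A \<Gamma> \<longleftrightarrow>
    (\<forall>(t, s)\<in>Delta. 0 \<le> \<Gamma> t s) \<and>
    (\<forall>t\<ge>0. set_borel_measurable lborel {0..t} (\<Gamma> t)) \<and>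
    cond_K \<Gamma> \<and>
    (\<exists>\<Gamma>M :: nat \<Rightarrow> real \<Rightarrow> real \<Rightarrow> real.
       (\<forall>M. cond_P (\<Gamma>M M)) \<and>
       (\<forall>t\<ge>0. ((\<lambda>M. \<integral>\<^sup>+ s\<in>{0..t}. ennreal ((\<Gamma> t s - \<Gamma>M M t s)\<^sup>2) \<partial>lborel) \<longlongrightarrow> 0)
                sequentially) \<and>
       (\<forall>T. \<exists>\<eta>::real. \<exists>\<gamma>::real. \<eta> > 0 \<and> 0 < \<gamma> \<and> \<gamma> \<le> 1/2 \<and>
         (\<forall>M s t. 0 \<le> s \<and> s \<le> t \<and> t \<le> T \<longrightarrow>
            (\<integral>\<^sup>+ u\<in>{s..t}. ennreal ((\<Gamma>M M t u)\<^sup>2) \<partial>lborel)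
          + (\<integral>\<^sup>+ u\<in>{0..s}. ennreal ((\<Gamma>M M t u - \<Gamma>M M s u)\<^sup>2) \<partial>lborel)
            \<le> ennreal (\<eta> * \<bar>t - s\<bar> powr (2 * \<gamma>)))))"

definition volterra_solution ::
  "(real \<Rightarrow> real \<Rightarrow> real) \<Rightarrow> real^'d \<Rightarrow> (real \<Rightarrow> real^'d) \<Rightarrow> (real \<Rightarrow> real^'d^'d)
   \<Rightarrow> real \<Rightarrow> (real \<Rightarrow> real^'d) \<Rightarrow> bool" where
  "volterra_solution \<Gamma> v F G T X \<longleftrightarrow>
    (\<forall>t\<in>{0..T}.
       set_integrable lborel {0..t} (\<lambda>s. \<Gamma> t s *\<^sub>R (F s + G s *v X s)) \<and>
       X t = v + (LINT s:{0..t}|lborel. \<Gamma> t s *\<^sub>R (F s + G s *v X s)))"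

end

theory Submission
  imports Defs
begin

text \<open>Existence and uniqueness come from Picard iteration: by Cauchy--Schwarz, condition (K)
  gives \<open>|\<Phi>(X)(t) - \<Phi>(Y)(t)|\<^sup>2 \<le> L \<integral>\<^sub>0\<^sup>t |X - Y|\<^sup>2\<close> for the map \<open>\<Phi>\<close> defined by the right-hand
  side, so the iterates converge uniformly and Gronwall's inequality forces uniqueness.

  Nonnegativity is first shown for kernels satisfying (P). There the implicit discretisation
  \<open>S\<^sub>k = v + h \<Sum>\<^sub>j\<^sub>\<le>\<^sub>k \<Gamma>(t\<^sub>k,t\<^sub>j) (F(t\<^sub>j) + G(t\<^sub>j) S\<^sub>j)\<close> stays nonnegative, since \<open>\<Gamma>\<close> preserves
  nonnegativity and \<open>I - h \<Gamma>(t\<^sub>k,t\<^sub>k) G(t\<^sub>k)\<close> has a nonnegative inverse for the Metzler matrix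
  \<open>G(t\<^sub>k)\<close>, and it converges to the solution as \<open>h \<rightarrow> 0\<close>. A general kernel is the \<open>L\<^sup>2\<close>-limit of
  kernels \<open>\<Gamma>\<^sub>M\<close> satisfying (P) and (K) with uniform constants; by Gronwall's inequality and
  dominated convergence the solutions for \<open>\<Gamma>\<^sub>M\<close> converge pointwise to the solution for \<open>\<Gamma>\<close>,
  which is therefore nonnegative.\<close>

section \<open>Metzler matrices\<close>

definition abs_entry_sum :: "real^'n^'m \<Rightarrow> real" where
  "abs_entry_sum A = (\<Sum>i\<in>UNIV. \<Sum>j\<in>UNIV. \<bar>A $ i $ j\<bar>)"

lemma abs_entry_sum_nonneg: "0 \<le> abs_entry_sum A"
  by (simp add: abs_entry_sum_def sum_nonneg)

lemma abs_entry_le_abs_entry_sum: "\<bar>A $ i $ j\<bar> \<le> abs_entry_sum A"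
proof -
  have "\<bar>A $ i $ j\<bar> \<le> (\<Sum>j\<in>UNIV. \<bar>A $ i $ j\<bar>)"
    by (rule member_le_sum) auto
  also have "\<dots> \<le> (\<Sum>i\<in>UNIV. \<Sum>j\<in>UNIV. \<bar>A $ i $ j\<bar>)"
    by (rule member_le_sum[of i UNIV "\<lambda>i. \<Sum>j\<in>UNIV. \<bar>A $ i $ j\<bar>"]) (auto intro: sum_nonneg)
  finally show ?thesis unfolding abs_entry_sum_def .
qed

lemma norm_mat_vec_le: "norm (A *v x) \<le> abs_entry_sum A * norm x"
proof -
  have "norm (A *v x) \<le> (\<Sum>i\<in>UNIV. \<bar>(A *v x) $ i\<bar>)"
    by (rule norm_le_l1_cart)
  also have "\<dots> \<le> (\<Sum>i\<in>UNIV. \<Sum>j\<in>UNIV. \<bar>A $ i $ j\<bar> * norm x)"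
  proof (rule sum_mono)
    fix i
    have "\<bar>(A *v x) $ i\<bar> \<le> (\<Sum>j\<in>UNIV. \<bar>A $ i $ j * x $ j\<bar>)"
      unfolding matrix_vector_mult_def by (simp add: sum_abs)
    also have "\<dots> \<le> (\<Sum>j\<in>UNIV. \<bar>A $ i $ j\<bar> * norm x)"
      by (rule sum_mono) (simp add: abs_mult component_le_norm_cart mult_left_mono)
    finally show "\<bar>(A *v x) $ i\<bar> \<le> (\<Sum>j\<in>UNIV. \<bar>A $ i $ j\<bar> * norm x)" .
  qed
  finally show ?thesis
    by (simp add: sum_distrib_right abs_entry_sum_def)
qed

lemma continuous_on_abs_entry_sum [continuous_intros]:
  "continuous_on S G \<Longrightarrow> continuous_on S (\<lambda>t. abs_entry_sum (G t))"
  unfolding abs_entry_sum_def by (intro continuous_intros) (auto intro: continuous_on_component)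

lemma continuous_on_mat_vec [continuous_intros]:
  fixes G :: "real \<Rightarrow> real^'n^'m"
  assumes "continuous_on S G" "continuous_on S X"
  shows "continuous_on S (\<lambda>t. G t *v X t)"
  unfolding matrix_vector_mult_def
  by (intro continuous_intros continuous_on_component assms)

lemma metzler_shift_nonneg:
  fixes A :: "real^'n^'n"
  assumes metzler: "\<And>i j. i \<noteq> j \<Longrightarrow> 0 \<le> A $ i $ j" and x: "\<And>j. 0 \<le> x $ j"
    and lam: "abs_entry_sum A \<le> lam"
  shows "0 \<le> (A *v x + lam *\<^sub>R x) $ i"
proof -
  have "(A *v x) $ i = A $ i $ i * x $ i + (\<Sum>j\<in>UNIV - {i}. A $ i $ j * x $ j)"
    unfolding matrix_vector_mult_def by (simp add: sum.remove[of UNIV i])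
  moreover have "0 \<le> (\<Sum>j\<in>UNIV - {i}. A $ i $ j * x $ j)"
    using metzler x by (intro sum_nonneg) auto
  moreover have "- A $ i $ i * x $ i \<le> lam * x $ i"
    using abs_entry_le_abs_entry_sum[of A i i] lam x[of i] by (intro mult_right_mono) auto
  ultimately show ?thesis by simp
qed

lemma linear_fixed_point_unique:
  assumes \<epsilon>: "0 \<le> \<epsilon>" and small: "\<epsilon> * abs_entry_sum A < 1"
    and S1: "S1 = b + \<epsilon> *\<^sub>R (A *v S1)" and S2: "S2 = b + \<epsilon> *\<^sub>R (A *v S2)"
  shows "S1 = S2"
proof -
  have "S1 - S2 = \<epsilon> *\<^sub>R (A *v (S1 - S2))"
    using S1 S2 by (metis add_diff_cancel_left matrix_vector_mult_diff_distrib scaleR_diff_right)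
  then have "norm (S1 - S2) = \<epsilon> * norm (A *v (S1 - S2))"
    using \<epsilon> by (metis abs_of_nonneg norm_scaleR)
  also have "\<dots> \<le> \<epsilon> * abs_entry_sum A * norm (S1 - S2)"
    using \<epsilon> norm_mat_vec_le[of A "S1 - S2"] by (simp add: mult.assoc mult_left_mono)
  finally have "(1 - \<epsilon> * abs_entry_sum A) * norm (S1 - S2) \<le> 0"
    by (simp add: algebra_simps)
  then show ?thesis using small by (simp add: mult_le_0_iff)
qed

text \<open>Adding \<open>\<lambda> S\<close> to both sides of \<open>S = b + \<epsilon> A S\<close> with \<open>\<lambda> \<ge> \<bar>A\<bar>\<close> turns the
  Metzler matrix \<open>A\<close> into the nonnegative matrix \<open>A + \<lambda> I\<close>; the rescaled map is a
  contraction of the closed positive orthant.\<close>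

lemma metzler_fixed_point_nonneg:
  fixes A :: "real^'n^'n"
  assumes \<epsilon>: "0 \<le> \<epsilon>" and small: "2 * (\<epsilon> * abs_entry_sum A) < 1"
    and metzler: "\<And>i j. i \<noteq> j \<Longrightarrow> 0 \<le> A $ i $ j" and b: "\<And>i. 0 \<le> b $ i"
  obtains S where "\<And>i. 0 \<le> S $ i" and "S = b + \<epsilon> *\<^sub>R (A *v S)"
proof -
  define lam where "lam = abs_entry_sum A"
  have lam: "0 \<le> lam" unfolding lam_def by (rule abs_entry_sum_nonneg)
  define Q where "Q S = (1 / (1 + \<epsilon> * lam)) *\<^sub>R (b + \<epsilon> *\<^sub>R (A *v S + lam *\<^sub>R S))" for S
  define orthant where "orthant = {x::real^'n. \<forall>i. 0 \<le> x $ i}"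
  have d: "1 + \<epsilon> * lam > 0" using \<epsilon> lam by (simp add: add_pos_nonneg)
  have "\<exists>!S\<in>orthant. Q S = S"
  proof (rule Banach_fix[of orthant "2 * (\<epsilon> * lam)"])
    show "complete orthant"
      unfolding orthant_def using closed_positive_orthant complete_eq_closed by blast
    show "orthant \<noteq> {}" unfolding orthant_def by (auto intro!: exI[of _ 0])
    show "0 \<le> 2 * (\<epsilon> * lam)" "2 * (\<epsilon> * lam) < 1" using \<epsilon> lam small unfolding lam_def by auto
    show "Q ` orthant \<subseteq> orthant"
      using metzler_shift_nonneg[OF metzler] b \<epsilon> d unfolding orthant_def Q_def lam_def by auto
  next
    fix x y
    have "norm (A *v (x - y) + lam *\<^sub>R (x - y)) \<le> 2 * lam * norm (x - y)"
      using norm_triangle_ineq[of "A *v (x - y)" "lam *\<^sub>R (x - y)"] norm_mat_vec_le[of A "x - y"] lam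
      unfolding lam_def by simp
    moreover have "Q x - Q y = (\<epsilon> / (1 + \<epsilon> * lam)) *\<^sub>R (A *v (x - y) + lam *\<^sub>R (x - y))"
      unfolding Q_def by (simp add: matrix_vector_mult_diff_distrib algebra_simps)
    ultimately have "dist (Q x) (Q y) \<le> \<epsilon> / (1 + \<epsilon> * lam) * (2 * lam * norm (x - y))"
      using \<epsilon> d by (simp add: dist_norm divide_right_mono mult_left_mono)
    also have "\<dots> \<le> \<epsilon> * (2 * lam * norm (x - y))"
      using \<epsilon> d lam by (intro mult_right_mono) (auto simp: divide_le_eq mult_le_cancel_left1)
    finally show "dist (Q x) (Q y) \<le> 2 * (\<epsilon> * lam) * dist x y"
      by (simp add: dist_norm mult_ac)
  qed
  then obtain S where S: "S \<in> orthant" "Q S = S" by auto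
  have "(1 + \<epsilon> * lam) *\<^sub>R S = b + \<epsilon> *\<^sub>R (A *v S + lam *\<^sub>R S)"
    using S(2) d unfolding Q_def by (metis (no_types) divide_self_if less_irrefl scaleR_one
        scaleR_scaleR times_divide_eq_left times_divide_eq_right)
  then have "S = b + \<epsilon> *\<^sub>R (A *v S)"
    by (simp add: algebra_simps scaleR_add_right)
  with S(1) show ?thesis using that unfolding orthant_def by blast
qed

definition resolvent :: "real \<Rightarrow> real^'n^'n \<Rightarrow> real^'n \<Rightarrow> real^'n" where
  "resolvent \<epsilon> A b = (THE S. S = b + \<epsilon> *\<^sub>R (A *v S))"

lemma resolvent_eq:
  assumes \<epsilon>: "0 \<le> \<epsilon>" and small: "\<epsilon> * abs_entry_sum A < 1"
  shows "resolvent \<epsilon> A b = b + \<epsilon> *\<^sub>R (A *v resolvent \<epsilon> A b)"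
proof -
  have "\<exists>!S. b + \<epsilon> *\<^sub>R (A *v S) = S"
  proof (rule banach_fix_type[of "\<epsilon> * abs_entry_sum A"])
    show "0 \<le> \<epsilon> * abs_entry_sum A" by (intro mult_nonneg_nonneg \<epsilon> abs_entry_sum_nonneg)
    show "\<forall>x y. dist (b + \<epsilon> *\<^sub>R (A *v x)) (b + \<epsilon> *\<^sub>R (A *v y)) \<le> \<epsilon> * abs_entry_sum A * dist x y"
    proof (intro allI)
      fix x y
      have "dist (b + \<epsilon> *\<^sub>R (A *v x)) (b + \<epsilon> *\<^sub>R (A *v y)) = \<epsilon> * norm (A *v (x - y))"
        using \<epsilon> by (simp add: dist_norm matrix_vector_mult_diff_distrib flip: scaleR_diff_right)
      also have "\<dots> \<le> \<epsilon> * (abs_entry_sum A * norm (x - y))"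
        using \<epsilon> norm_mat_vec_le by (rule mult_left_mono[rotated])
      finally show "dist (b + \<epsilon> *\<^sub>R (A *v x)) (b + \<epsilon> *\<^sub>R (A *v y)) \<le> \<epsilon> * abs_entry_sum A * dist x y"
        by (simp add: dist_norm mult.assoc)
    qed
  qed (use small in auto)
  then have "\<exists>!S. S = b + \<epsilon> *\<^sub>R (A *v S)" by metis
  then show ?thesis unfolding resolvent_def by (rule theI')
qed

lemma resolvent_nonneg:
  fixes A :: "real^'n^'n"
  assumes \<epsilon>: "0 \<le> \<epsilon>" and small: "2 * (\<epsilon> * abs_entry_sum A) < 1"
    and metzler: "\<And>i j. i \<noteq> j \<Longrightarrow> 0 \<le> A $ i $ j" and b: "\<And>i. 0 \<le> b $ i"
  shows "0 \<le> resolvent \<epsilon> A b $ i"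
proof -
  obtain S where S: "\<And>i. 0 \<le> S $ i" "S = b + \<epsilon> *\<^sub>R (A *v S)"
    using metzler_fixed_point_nonneg[OF assms] by blast
  have small': "\<epsilon> * abs_entry_sum A < 1"
    using small \<epsilon> abs_entry_sum_nonneg[of A] by linarith
  have "resolvent \<epsilon> A b = S"
    using linear_fixed_point_unique[OF \<epsilon> small' resolvent_eq[OF \<epsilon> small'] S(2)] .
  then show ?thesis using S(1) by simp
qed

section \<open>Gronwall-type inequalities\<close>

lemma continuous_on_Icc_bound:
  fixes f :: "real \<Rightarrow> 'a::real_normed_vector"
  assumes "continuous_on {a..b} f"
  obtains B where "B > 0" "\<And>t. t \<in> {a..b} \<Longrightarrow> norm (f t) \<le> B"
proof -
  have "bounded (f ` {a..b})"
    by (intro compact_imp_bounded compact_continuous_image assms) auto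
  then show ?thesis using that bounded_pos by (metis imageI)
qed

lemma integral_norm_sq_le:
  fixes \<phi> :: "real \<Rightarrow> 'a::euclidean_space"
  assumes "continuous_on {a..b} \<phi>" "\<And>s. s \<in> {a..b} \<Longrightarrow> norm (\<phi> s) \<le> B" "a \<le> b"
  shows "integral {a..b} (\<lambda>s. (norm (\<phi> s))\<^sup>2) \<le> (b - a) * B\<^sup>2"
proof -
  have "integral {a..b} (\<lambda>s. (norm (\<phi> s))\<^sup>2) \<le> integral {a..b} (\<lambda>s. B\<^sup>2)"
    by (intro integral_le integrable_continuous_interval continuous_intros assms)
       (auto intro!: power_mono assms)
  then show ?thesis using assms by simp
qed

lemma norm_add_sq_le: "(norm (x + y :: 'a::real_normed_vector))\<^sup>2 \<le> 2 * (norm x)\<^sup>2 + 2 * (norm y)\<^sup>2"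
proof -
  have "(norm (x + y))\<^sup>2 \<le> (norm x + norm y)\<^sup>2"
    by (intro power_mono norm_triangle_ineq) simp
  also have "\<dots> \<le> 2 * (norm x)\<^sup>2 + 2 * (norm y)\<^sup>2"
    using sum_squares_ge_zero[of "norm x - norm y" 0] by (simp add: power2_eq_square algebra_simps)
  finally show ?thesis .
qed

lemma has_integral_power_div_fact:
  fixes K t :: real
  assumes "0 \<le> t"
  shows "((\<lambda>s. (K * s)^n / fact n) has_integral (K^n * t^Suc n / fact (Suc n))) {0..t}"
proof -
  have "((\<lambda>s. (K * s)^n / fact n) has_integral
      ((\<lambda>s. K^n * s^Suc n / fact (Suc n)) t - (\<lambda>s. K^n * s^Suc n / fact (Suc n)) 0)) {0..t}"
  proof (rule fundamental_theorem_of_calculus[OF assms])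
    fix x assume "x \<in> {0..t}"
    have "((\<lambda>s. K^n * s^Suc n / fact (Suc n)) has_real_derivative
        (K^n * (real (Suc n) * x^n) / fact (Suc n))) (at x within {0..t})"
      by (intro derivative_eq_intros) auto
    moreover have "K^n * (real (Suc n) * x^n) / fact (Suc n) = (K * x)^n / fact n"
      by (simp add: power_mult_distrib fact_Suc field_simps del: of_nat_Suc)
    ultimately show "((\<lambda>s. K^n * s^Suc n / fact (Suc n)) has_vector_derivative (K * x)^n / fact n)
        (at x within {0..t})"
      by (simp add: has_real_derivative_iff_has_vector_derivative)
  qed
  then show ?thesis by simp
qed

lemma iterated_integral_ineq:
  fixes f :: "nat \<Rightarrow> real \<Rightarrow> real"
  assumes cont: "\<And>n. continuous_on {0..T} (f n)"
    and f0: "\<And>t. t \<in> {0..T} \<Longrightarrow> f 0 t \<le> M"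
    and step: "\<And>n t. t \<in> {0..T} \<Longrightarrow> f (Suc n) t \<le> c + K * integral {0..t} (f n)"
    and K: "K \<ge> 0" and c: "c \<ge> 0"
  shows "t \<in> {0..T} \<Longrightarrow> f n t \<le> c * (\<Sum>j<n. (K * t)^j / fact j) + M * (K * t)^n / fact n"
proof (induction n arbitrary: t)
  case 0
  then show ?case using f0 by simp
next
  case (Suc n)
  have t: "0 \<le> t" "t \<le> T" using Suc.prems by auto
  let ?g = "\<lambda>s. c * (\<Sum>j<n. (K * s)^j / fact j) + M * ((K * s)^n / fact n)"
  let ?Ig = "c * (\<Sum>j<n. K^j * t^Suc j / fact (Suc j)) + M * (K^n * t^Suc n / fact (Suc n))"
  have gi: "(?g has_integral ?Ig) {0..t}"
    by (intro has_integral_add has_integral_mult_right has_integral_sum has_integral_power_div_fact t) auto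
  have fi: "f n integrable_on {0..t}"
    by (rule integrable_continuous_interval, rule continuous_on_subset[OF cont]) (use t in auto)
  have "integral {0..t} (f n) \<le> integral {0..t} ?g"
    by (rule integral_le[OF fi]) (use gi Suc.IH t in \<open>auto simp: integrable_on_def\<close>)
  also have "\<dots> = ?Ig"
    using gi by (rule integral_unique)
  finally have "f (Suc n) t \<le> c + K * ?Ig"
    using step[OF Suc.prems] K by (meson mult_left_mono order_trans add_left_mono)
  also have "\<dots> = c * (\<Sum>j<Suc n. (K * t)^j / fact j) + M * (K * t)^Suc n / fact (Suc n)"
  proof -
    have "(\<Sum>j<Suc n. (K * t)^j / fact j) = 1 + (\<Sum>j<n. (K * t)^Suc j / fact (Suc j))"
      by (subst sum.lessThan_Suc_shift) simp
    moreover have "K * (\<Sum>j<n. K^j * t^Suc j / fact (Suc j)) = (\<Sum>j<n. (K * t)^Suc j / fact (Suc j))"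
      unfolding sum_distrib_left by (intro sum.cong refl) (simp add: power_mult_distrib field_simps)
    ultimately show ?thesis
      by (simp add: algebra_simps power_mult_distrib)
  qed
  finally show ?case .
qed

lemma power_div_fact_LIMSEQ_zero: "(\<lambda>n. (x::real)^n / fact n) \<longlonglongrightarrow> 0"
  using summable_LIMSEQ_zero[OF sums_summable[OF exp_converges[of x]]]
  by (simp add: divide_inverse_commute)

lemma sum_power_div_fact_le_exp:
  assumes "0 \<le> (x::real)"
  shows "(\<Sum>j<n. x^j / fact j) \<le> exp x"
proof -
  have "(\<Sum>j<n. x^j /\<^sub>R fact j) \<le> (\<Sum>n. x^n /\<^sub>R fact n)"
    using assms by (intro sum_le_suminf sums_summable[OF exp_converges]) auto
  then show ?thesis
    using exp_converges[of x] by (simp add: divide_inverse_commute sums_iff)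
qed

lemma gronwall_integral:
  fixes u :: "real \<Rightarrow> real"
  assumes cont: "continuous_on {0..T} u"
    and step: "\<And>t. t \<in> {0..T} \<Longrightarrow> u t \<le> c + K * integral {0..t} u"
    and K: "K \<ge> 0" and c: "c \<ge> 0" and t: "t \<in> {0..T}"
  shows "u t \<le> c * exp (K * t)"
proof -
  obtain M where M: "\<And>t. t \<in> {0..T} \<Longrightarrow> norm (u t) \<le> M"
    using continuous_on_Icc_bound[OF cont] by blast
  have Kt: "0 \<le> K * t" using K t by auto
  have "u t \<le> c * (\<Sum>j<n. (K * t)^j / fact j) + M * (K * t)^n / fact n" for n
    by (rule iterated_integral_ineq[where f = "\<lambda>_. u", OF cont _ step K c t])
       (use M in \<open>auto simp: abs_le_iff\<close>)
  then have "u t \<le> c * exp (K * t) + M * ((K * t)^n / fact n)" for n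
    using sum_power_div_fact_le_exp[OF Kt, of n] c
    by (smt (verit) mult_left_mono times_divide_eq_right)
  moreover have "(\<lambda>n. c * exp (K * t) + M * ((K * t)^n / fact n)) \<longlonglongrightarrow> c * exp (K * t) + M * 0"
    by (intro tendsto_intros power_div_fact_LIMSEQ_zero)
  ultimately show ?thesis
    by (intro LIMSEQ_le_const[of _ "c * exp (K * t)"]) auto
qed

lemma gronwall_integral_variable:
  fixes u a :: "real \<Rightarrow> real"
  assumes cu: "continuous_on {0..T} u" and ca: "continuous_on {0..T} a"
    and a: "\<And>t. t \<in> {0..T} \<Longrightarrow> 0 \<le> a t" and K: "0 \<le> K"
    and step: "\<And>t. t \<in> {0..T} \<Longrightarrow> u t \<le> a t + K * integral {0..t} u"
    and t: "t \<in> {0..T}"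
  shows "u t \<le> a t + K * (integral {0..T} a * exp (K * T))"
proof -
  define U where "U t = integral {0..t} u" for t
  have int: "f integrable_on {0..s}" if "continuous_on {0..T} f" "s \<in> {0..T}" for f :: "real \<Rightarrow> real" and s
    using that by (intro integrable_continuous_interval continuous_on_subset[OF that(1)]) auto
  have cU: "continuous_on {0..T} U"
    unfolding U_def by (rule indefinite_integral_continuous_1[OF integrable_continuous_interval[OF cu]])
  have A: "0 \<le> integral {0..T} a"
    using a by (intro integral_nonneg integrable_continuous_interval ca) auto
  have "U s \<le> integral {0..T} a + K * integral {0..s} U" if s: "s \<in> {0..T}" for s
  proof -
    have "(\<lambda>r. a r + K * U r) integrable_on {0..s}"
      using s by (intro int continuous_intros ca cU)
    then have "U s \<le> integral {0..s} (\<lambda>r. a r + K * U r)"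
      unfolding U_def[of s] using s step by (intro integral_le int[OF cu s]) (auto simp: U_def)
    also have "\<dots> = integral {0..s} a + K * integral {0..s} U"
      using integral_add[OF int[OF ca s] integrable_on_cmult_left[OF int[OF cU s], of K]] by simp
    also have "integral {0..s} a \<le> integral {0..T} a"
      using s a by (intro integral_subset_le int[OF ca] integrable_continuous_interval ca) auto
    finally show ?thesis by simp
  qed
  then have "U t \<le> integral {0..T} a * exp (K * t)"
    by (intro gronwall_integral[OF cU _ K A t])
  also have "\<dots> \<le> integral {0..T} a * exp (K * T)"
    using A K t by (intro mult_left_mono) (auto intro: mult_left_mono)
  finally have "K * U t \<le> K * (integral {0..T} a * exp (K * T))"
    using K by (rule mult_left_mono)
  then show ?thesis
    using step[OF t] unfolding U_def by linarith
qed

lemma discrete_gronwall: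
  fixes a :: "nat \<Rightarrow> real"
  assumes a: "\<And>k. 0 \<le> a k"
    and rec: "\<And>k. k \<le> N \<Longrightarrow> a k \<le> q + r * (\<Sum>j\<le>k. a j)"
    and r: "0 \<le> r" "r \<le> 1/2" and q: "0 \<le> q"
  shows "k \<le> N \<Longrightarrow> a k \<le> 2 * q * (1 + 2 * r)^k"
proof (induction k rule: less_induct)
  case (less k)
  have "a k \<le> q + r * (\<Sum>j<k. a j) + r * a k"
    using rec[OF less.prems] by (simp add: lessThan_Suc_atMost[symmetric] algebra_simps)
  moreover have "(2 * r) * a k \<le> 1 * a k"
    using r a[of k] by (intro mult_right_mono) auto
  ultimately have ak: "a k \<le> 2 * q + 2 * r * (\<Sum>j<k. a j)"
    by (simp add: algebra_simps)
  have "(\<Sum>j<k. a j) \<le> (\<Sum>j<k. 2 * q * (1 + 2 * r)^j)"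
    using less by (intro sum_mono) auto
  then have "2 * r * (\<Sum>j<k. a j) \<le> 2 * r * (\<Sum>j<k. 2 * q * (1 + 2 * r)^j)"
    using r by (intro mult_left_mono) auto
  also have "\<dots> = 2 * q * (2 * r * (\<Sum>j<k. (1 + 2 * r)^j))"
    by (simp add: sum_distrib_left algebra_simps)
  also have "2 * r * (\<Sum>j<k. (1 + 2 * r)^j) = (1 + 2 * r)^k - 1"
  proof (cases "r = 0")
    case False
    then show ?thesis by (simp add: geometric_sum)
  qed simp
  finally show ?case using ak by (simp add: algebra_simps)
qed

lemma riemann_sum_error:
  fixes f :: "real \<Rightarrow> 'a::euclidean_space"
  assumes h: "h > 0" and c: "continuous_on {0..real k * h} f"
    and osc: "\<And>j s. j < k \<Longrightarrow> s \<in> {real j * h..real (Suc j) * h} \<Longrightarrow> norm (f s - f (real j * h)) \<le> e"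
  shows "norm (integral {0..real k * h} f - h *\<^sub>R (\<Sum>j<k. f (real j * h))) \<le> real k * h * e"
  using c osc
proof (induction k)
  case 0 then show ?case by simp
next
  case (Suc k)
  let ?I = "{real k * h..real (Suc k) * h}" and ?E = "\<lambda>k. integral {0..real k * h} f - h *\<^sub>R (\<Sum>j<k. f (real j * h))"
  have c0: "continuous_on {0..real k * h} f"
    by (rule continuous_on_subset[OF Suc.prems(1)]) (use h in auto)
  have c1: "continuous_on ?I f"
    by (rule continuous_on_subset[OF Suc.prems(1)]) (use h in auto)
  have IH: "norm (?E k) \<le> real k * h * e"
    by (rule Suc.IH[OF c0 Suc.prems(2)]) auto
  have "integral {0..real (Suc k) * h} f = integral {0..real k * h} f + integral ?I f"
    by (rule Henstock_Kurzweil_Integration.integral_combine[symmetric])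
       (use h Suc.prems(1) in \<open>auto intro: integrable_continuous_interval simp: algebra_simps\<close>)
  moreover have "integral ?I f = integral ?I (\<lambda>s. f s - f (real k * h)) + h *\<^sub>R f (real k * h)"
    using h integrable_continuous_interval[OF c1] by (subst integral_diff) (auto simp: algebra_simps)
  ultimately have "?E (Suc k) = ?E k + integral ?I (\<lambda>s. f s - f (real k * h))"
    by (simp add: algebra_simps scaleR_add_right)
  moreover have "norm (integral ?I (\<lambda>s. f s - f (real k * h))) \<le> e * (real (Suc k) * h - real k * h)"
    by (rule integral_bound) (use h Suc.prems(2)[of k] c1 in \<open>auto intro!: continuous_intros\<close>)
  ultimately have "norm (?E (Suc k)) \<le> real k * h * e + h * e"
    using IH norm_triangle_ineq[of "?E k" "integral ?I (\<lambda>s. f s - f (real k * h))"]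
    by (simp add: algebra_simps)
  then show ?case by (simp add: algebra_simps)
qed

lemma wfrec_less_than:
  assumes "\<And>f g k. (\<And>j. j < k \<Longrightarrow> f j = g j) \<Longrightarrow> H f k = H g k"
  shows "wfrec less_than H k = H (wfrec less_than H) k"
  using wfrec_fixpoint[OF wf_less_than, of H] assms unfolding adm_wf_def by (metis less_than_iff)

section \<open>Volterra integrals under condition (K)\<close>

lemma set_borel_measurable_diff:
  fixes f g :: "'a \<Rightarrow> real"
  assumes "set_borel_measurable M A f" "set_borel_measurable M A g"
  shows "set_borel_measurable M A (\<lambda>x. f x - g x)"
proof -
  have "(\<lambda>x. indicator A x *\<^sub>R (f x - g x)) = (\<lambda>x. indicator A x *\<^sub>R f x - indicator A x *\<^sub>R g x)"
    by (auto simp: algebra_simps)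
  then show ?thesis using assms unfolding set_borel_measurable_def by simp
qed

lemma nn_integral_kernel_Cauchy_Schwarz:
  fixes g :: "real \<Rightarrow> real" and \<psi> :: "real \<Rightarrow> 'a::euclidean_space"
  assumes gm: "set_borel_measurable lborel {a..b} g"
    and \<psi>: "continuous_on {a..b} \<psi>"
    and g: "(\<integral>\<^sup>+ u\<in>{a..b}. ennreal ((g u)\<^sup>2) \<partial>lborel) \<le> ennreal P"
  shows "(\<integral>\<^sup>+x. ennreal (norm (indicator {a..b} x *\<^sub>R (g x *\<^sub>R \<psi> x))) \<partial>lborel)\<^sup>2
    \<le> ennreal P * ennreal (integral {a..b} (\<lambda>s. (norm (\<psi> s))\<^sup>2))"
proof -
  let ?A = "{a..b}" and ?I = "integral {a..b} (\<lambda>s. (norm (\<psi> s))\<^sup>2)"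
  define ig where "ig x = indicator ?A x *\<^sub>R g x" for x
  define ip where "ip x = indicator ?A x *\<^sub>R \<psi> x" for x
  have igm: "ig \<in> borel_measurable lborel"
    using gm unfolding ig_def set_borel_measurable_def .
  have ipm: "ip \<in> borel_measurable lborel"
    unfolding ip_def using borel_measurable_continuous_on_indicator[OF _ \<psi>] by simp
  have ip2: "(\<integral>\<^sup>+x. ennreal (norm (ip x)) ^ 2 \<partial>lborel) = ennreal ?I"
  proof -
    have pint: "((\<lambda>s. (norm (\<psi> s))\<^sup>2) has_integral ?I) ?A"
      by (intro integrable_integral integrable_continuous_interval continuous_intros \<psi>)
    have "(\<integral>\<^sup>+x. ennreal (norm (ip x)) ^ 2 \<partial>lborel)
        = (\<integral>\<^sup>+x. ennreal (indicator ?A x * (norm (\<psi> x))\<^sup>2) \<partial>lborel)"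
      by (intro nn_integral_cong) (auto simp: ip_def indicator_def ennreal_power)
    then show ?thesis using nn_integral_has_integral_lebesgue[OF _ pint] by simp
  qed
  have ig2: "(\<integral>\<^sup>+x. ennreal (norm (ig x)) ^ 2 \<partial>lborel) \<le> ennreal P"
  proof -
    have "(\<integral>\<^sup>+x. ennreal (norm (ig x)) ^ 2 \<partial>lborel) = (\<integral>\<^sup>+ u\<in>?A. ennreal ((g u)\<^sup>2) \<partial>lborel)"
      by (intro nn_integral_cong) (auto simp: ig_def indicator_def ennreal_power)
    then show ?thesis using g by simp
  qed
  have "(\<integral>\<^sup>+x. ennreal (norm (indicator ?A x *\<^sub>R (g x *\<^sub>R \<psi> x))) \<partial>lborel)
      = (\<integral>\<^sup>+x. ennreal (norm (ig x)) * ennreal (norm (ip x)) \<partial>lborel)"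
    by (intro nn_integral_cong) (auto simp: ig_def ip_def indicator_def ennreal_mult)
  also have "\<dots>\<^sup>2 \<le> (\<integral>\<^sup>+x. ennreal (norm (ig x)) ^ 2 \<partial>lborel) * (\<integral>\<^sup>+x. ennreal (norm (ip x)) ^ 2 \<partial>lborel)"
    by (rule Cauchy_Schwarz_nn_integral) (use igm ipm in measurable)
  also have "\<dots> \<le> ennreal P * ennreal ?I"
    unfolding ip2 by (intro mult_right_mono ig2) auto
  finally show ?thesis .
qed

lemma kernel_Cauchy_Schwarz:
  fixes g :: "real \<Rightarrow> real" and \<psi> :: "real \<Rightarrow> 'a::euclidean_space"
  assumes gm: "set_borel_measurable lborel {a..b} g"
    and \<psi>: "continuous_on {a..b} \<psi>"
    and g: "(\<integral>\<^sup>+ u\<in>{a..b}. ennreal ((g u)\<^sup>2) \<partial>lborel) \<le> ennreal P" and P: "0 \<le> P"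
  shows "set_integrable lborel {a..b} (\<lambda>s. g s *\<^sub>R \<psi> s)"
    and "(norm (LINT s:{a..b}|lborel. g s *\<^sub>R \<psi> s))\<^sup>2 \<le> P * integral {a..b} (\<lambda>s. (norm (\<psi> s))\<^sup>2)"
proof -
  let ?A = "{a..b}" and ?I = "integral {a..b} (\<lambda>s. (norm (\<psi> s))\<^sup>2)"
  let ?N = "\<integral>\<^sup>+x. ennreal (norm (indicator ?A x *\<^sub>R (g x *\<^sub>R \<psi> x))) \<partial>lborel"
  note CS = nn_integral_kernel_Cauchy_Schwarz[OF gm \<psi> g]
  have m: "(\<lambda>x. indicator ?A x *\<^sub>R (g x *\<^sub>R \<psi> x)) \<in> borel_measurable lborel"
  proof -
    define ig where "ig x = indicator ?A x *\<^sub>R g x" for x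
    define ip where "ip x = indicator ?A x *\<^sub>R \<psi> x" for x
    have "ig \<in> borel_measurable lborel"
      using gm unfolding ig_def set_borel_measurable_def .
    moreover have "ip \<in> borel_measurable lborel"
      unfolding ip_def using borel_measurable_continuous_on_indicator[OF _ \<psi>] by simp
    moreover have "(\<lambda>x. indicator ?A x *\<^sub>R (g x *\<^sub>R \<psi> x)) = (\<lambda>x. ig x *\<^sub>R ip x)"
      by (auto simp: ig_def ip_def indicator_def)
    ultimately show ?thesis by simp
  qed
  have I: "0 \<le> ?I"
    by (intro integral_nonneg integrable_continuous_interval continuous_intros \<psi>) simp
  have "?N\<^sup>2 < \<infinity>"
    using CS by (rule le_less_trans) (simp add: ennreal_mult_less_top)
  then have "?N < \<infinity>"
    by (simp add: power_less_top_ennreal)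
  then show si: "set_integrable lborel ?A (\<lambda>s. g s *\<^sub>R \<psi> s)"
    unfolding set_integrable_def by (rule integrableI_bounded[OF m])
  have "ennreal (norm (LINT s:?A|lborel. g s *\<^sub>R \<psi> s)) \<le> ?N"
    unfolding set_lebesgue_integral_def
    by (rule integral_norm_bound_ennreal) (use si in \<open>simp add: set_integrable_def\<close>)
  then have "(ennreal (norm (LINT s:?A|lborel. g s *\<^sub>R \<psi> s)))\<^sup>2 \<le> ennreal P * ennreal ?I"
    using CS by (meson order_trans power_mono zero_le)
  then show "(norm (LINT s:?A|lborel. g s *\<^sub>R \<psi> s))\<^sup>2 \<le> P * ?I"
    using P I by (metis ennreal_le_iff ennreal_mult ennreal_power mult_nonneg_nonneg norm_ge_zero)
qed

text \<open>Condition (K) on \<open>[0,T]\<close> with its constants made explicit, so that the approximating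
  kernels of Assumption (A) can be required to share them.\<close>

definition cond_K_on :: "(real \<Rightarrow> real \<Rightarrow> real) \<Rightarrow> real \<Rightarrow> real \<Rightarrow> real \<Rightarrow> bool" where
  "cond_K_on \<Gamma> T \<eta> \<gamma> \<longleftrightarrow> \<eta> > 0 \<and> \<gamma> > 0 \<and>
     (\<forall>t\<in>{0..T}. set_borel_measurable lborel {0..t} (\<Gamma> t)) \<and>
     (\<forall>s t. 0 \<le> s \<and> s \<le> t \<and> t \<le> T \<longrightarrow>
         (\<integral>\<^sup>+ u\<in>{s..t}. ennreal ((\<Gamma> t u)\<^sup>2) \<partial>lborel)
       + (\<integral>\<^sup>+ u\<in>{0..s}. ennreal ((\<Gamma> t u - \<Gamma> s u)\<^sup>2) \<partial>lborel)
         \<le> ennreal (\<eta> * (t - s) powr (2 * \<gamma>)))"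

context
  fixes \<Gamma> T \<eta> \<gamma>
  assumes K: "cond_K_on \<Gamma> T \<eta> \<gamma>"
begin

lemma cond_K_on_pos: "\<eta> > 0" "\<gamma> > 0"
  using K unfolding cond_K_on_def by auto

lemma cond_K_on_tail:
  assumes "0 \<le> s" "s \<le> t" "t \<le> T"
  shows "(\<integral>\<^sup>+ u\<in>{s..t}. ennreal ((\<Gamma> t u)\<^sup>2) \<partial>lborel) \<le> ennreal (\<eta> * (t - s) powr (2 * \<gamma>))"
  using K assms unfolding cond_K_on_def by (meson add_increasing2 order_trans zero_le order_refl)

lemma cond_K_on_increment:
  assumes "0 \<le> s" "s \<le> t" "t \<le> T"
  shows "(\<integral>\<^sup>+ u\<in>{0..s}. ennreal ((\<Gamma> t u - \<Gamma> s u)\<^sup>2) \<partial>lborel) \<le> ennreal (\<eta> * (t - s) powr (2 * \<gamma>))"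
  using K assms unfolding cond_K_on_def by (meson add_increasing order_trans zero_le order_refl)

lemma cond_K_on_measurable:
  assumes "0 \<le> r" "r \<le> s" "s \<le> t" "t \<le> T"
  shows "set_borel_measurable lborel {r..s} (\<Gamma> t)"
proof (rule set_borel_measurable_subset)
  show "set_borel_measurable lborel {0..t} (\<Gamma> t)"
    using K assms unfolding cond_K_on_def by auto
qed (use assms in auto)

lemma cond_K_on_bound:
  assumes "0 \<le> t" "t \<le> T"
  shows "(\<integral>\<^sup>+ u\<in>{0..t}. ennreal ((\<Gamma> t u)\<^sup>2) \<partial>lborel) \<le> ennreal (\<eta> * T powr (2 * \<gamma>))"
proof -
  have "\<eta> * t powr (2 * \<gamma>) \<le> \<eta> * T powr (2 * \<gamma>)"
    using cond_K_on_pos assms by (intro mult_left_mono powr_mono2) auto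
  then show ?thesis
    using cond_K_on_tail[of 0 t] assms by (auto intro: order_trans ennreal_leI)
qed

end

definition volterra_int :: "(real \<Rightarrow> real \<Rightarrow> real) \<Rightarrow> (real \<Rightarrow> 'a::euclidean_space) \<Rightarrow> real \<Rightarrow> 'a" where
  "volterra_int \<Gamma> \<phi> t = (LINT s:{0..t}|lborel. \<Gamma> t s *\<^sub>R \<phi> s)"

context
  fixes \<Gamma> T \<eta> \<gamma> and \<phi> :: "real \<Rightarrow> 'a::euclidean_space"
  assumes K: "cond_K_on \<Gamma> T \<eta> \<gamma>" and \<phi>: "continuous_on {0..T} \<phi>"
begin

lemma set_integrable_volterra:
  assumes "t \<in> {0..T}"
  shows "set_integrable lborel {0..t} (\<lambda>s. \<Gamma> t s *\<^sub>R \<phi> s)"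
  by (rule kernel_Cauchy_Schwarz(1)[OF cond_K_on_measurable[OF K]
        continuous_on_subset[OF \<phi>] cond_K_on_bound[OF K]])
     (use assms cond_K_on_pos[OF K] in auto)

lemma norm_volterra_int_sq_le:
  assumes "t \<in> {0..T}"
  shows "(norm (volterra_int \<Gamma> \<phi> t))\<^sup>2 \<le> \<eta> * T powr (2 * \<gamma>) * integral {0..t} (\<lambda>s. (norm (\<phi> s))\<^sup>2)"
  unfolding volterra_int_def
  by (rule kernel_Cauchy_Schwarz(2)[OF cond_K_on_measurable[OF K]
        continuous_on_subset[OF \<phi>] cond_K_on_bound[OF K]])
     (use assms cond_K_on_pos[OF K] in auto)

end

lemma volterra_int_diff:
  fixes \<phi> \<psi> :: "real \<Rightarrow> 'a::euclidean_space"
  assumes K: "cond_K_on \<Gamma> T \<eta> \<gamma>" and "continuous_on {0..T} \<phi>" "continuous_on {0..T} \<psi>"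
    and t: "t \<in> {0..T}"
  shows "volterra_int \<Gamma> \<phi> t - volterra_int \<Gamma> \<psi> t = volterra_int \<Gamma> (\<lambda>s. \<phi> s - \<psi> s) t"
  unfolding volterra_int_def
  by (subst set_integral_diff(2)[OF set_integrable_volterra[OF K _ t] set_integrable_volterra[OF K _ t],
        symmetric]) (simp_all add: scaleR_diff_right assms)

text \<open>For \<open>s < t\<close>, \<open>V(t) - V(s) = \<integral>\<^sub>s\<^sup>t \<Gamma>(t,u) \<phi>(u) du + \<integral>\<^sub>0\<^sup>s (\<Gamma>(t,u) - \<Gamma>(s,u)) \<phi>(u) du\<close>,
  and condition (K) bounds both terms by \<open>(t - s)\<^sup>\<gamma>\<close>.\<close>

lemma dist_volterra_int_le:
  fixes \<phi> :: "real \<Rightarrow> 'a::euclidean_space"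
  assumes K: "cond_K_on \<Gamma> T \<eta> \<gamma>" and c: "continuous_on {0..T} \<phi>"
    and B: "\<And>s. s \<in> {0..T} \<Longrightarrow> norm (\<phi> s) \<le> B"
    and st: "0 \<le> s" "s < t" "t \<le> T"
  shows "dist (volterra_int \<Gamma> \<phi> t) (volterra_int \<Gamma> \<phi> s) \<le> 2 * sqrt (\<eta> * (t - s) powr (2 * \<gamma>) * (T * B\<^sup>2))"
proof -
  let ?f = "\<lambda>u. \<Gamma> t u *\<^sub>R \<phi> u" and ?g = "\<lambda>u. (\<Gamma> t u - \<Gamma> s u) *\<^sub>R \<phi> u"
  let ?P = "\<eta> * (t - s) powr (2 * \<gamma>)"
  have P: "0 \<le> ?P" using cond_K_on_pos[OF K] by simp
  have TB: "?P * ((t - s) * B\<^sup>2) \<le> ?P * (T * B\<^sup>2)" "?P * (s * B\<^sup>2) \<le> ?P * (T * B\<^sup>2)"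
    using P st by (auto intro!: mult_left_mono mult_right_mono)
  have ct: "continuous_on {s..t} \<phi>" "continuous_on {0..s} \<phi>"
    using st by (auto intro: continuous_on_subset[OF c])
  have fi: "?f integrable_on {0..t}" and Vt: "volterra_int \<Gamma> \<phi> t = integral {0..t} ?f"
    using set_borel_integral_eq_integral[OF set_integrable_volterra[OF K c]] st
    unfolding volterra_int_def by auto
  have gi: "(\<lambda>u. \<Gamma> s u *\<^sub>R \<phi> u) integrable_on {0..s}"
    and Vs: "volterra_int \<Gamma> \<phi> s = integral {0..s} (\<lambda>u. \<Gamma> s u *\<^sub>R \<phi> u)"
    using set_borel_integral_eq_integral[OF set_integrable_volterra[OF K c]] st
    unfolding volterra_int_def by auto
  have m1: "set_borel_measurable lborel {s..t} (\<Gamma> t)"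
    by (rule cond_K_on_measurable[OF K]) (use st in auto)
  have b1: "(\<integral>\<^sup>+ u\<in>{s..t}. ennreal ((\<Gamma> t u)\<^sup>2) \<partial>lborel) \<le> ennreal ?P"
    by (rule cond_K_on_tail[OF K]) (use st in auto)
  have n1: "(norm (integral {s..t} ?f))\<^sup>2 \<le> ?P * ((t - s) * B\<^sup>2)"
    using kernel_Cauchy_Schwarz[OF m1 ct(1) b1 P]
      integral_norm_sq_le[OF ct(1), of B] B st mult_left_mono[OF _ P]
    by (smt (verit, best) atLeastAtMost_iff set_borel_integral_eq_integral(2))
  have m2: "set_borel_measurable lborel {0..s} (\<lambda>u. \<Gamma> t u - \<Gamma> s u)"
    by (intro set_borel_measurable_diff cond_K_on_measurable[OF K]) (use st in auto)
  have b2: "(\<integral>\<^sup>+ u\<in>{0..s}. ennreal ((\<Gamma> t u - \<Gamma> s u)\<^sup>2) \<partial>lborel) \<le> ennreal ?P"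
    by (rule cond_K_on_increment[OF K]) (use st in auto)
  have n2: "(norm (integral {0..s} ?g))\<^sup>2 \<le> ?P * (s * B\<^sup>2)"
    using kernel_Cauchy_Schwarz[OF m2 ct(2) b2 P]
      integral_norm_sq_le[OF ct(2), of B] B st mult_left_mono[OF _ P]
    by (smt (verit, best) atLeastAtMost_iff set_borel_integral_eq_integral(2))
  have "integral {0..s} ?g = integral {0..s} ?f - integral {0..s} (\<lambda>u. \<Gamma> s u *\<^sub>R \<phi> u)"
    using integrable_on_subinterval[OF fi, of 0 s] gi st
    by (subst integral_diff[symmetric]) (auto simp: algebra_simps)
  moreover have "integral {0..t} ?f = integral {0..s} ?f + integral {s..t} ?f"
    by (rule Henstock_Kurzweil_Integration.integral_combine[symmetric]) (use st fi in auto)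
  ultimately have "volterra_int \<Gamma> \<phi> t - volterra_int \<Gamma> \<phi> s = integral {s..t} ?f + integral {0..s} ?g"
    unfolding Vt Vs by simp
  then have "dist (volterra_int \<Gamma> \<phi> t) (volterra_int \<Gamma> \<phi> s)
      \<le> norm (integral {s..t} ?f) + norm (integral {0..s} ?g)"
    by (simp add: dist_norm norm_triangle_ineq)
  also have "\<dots> \<le> sqrt (?P * (T * B\<^sup>2)) + sqrt (?P * (T * B\<^sup>2))"
    using n1 n2 TB by (intro add_mono real_le_rsqrt) auto
  finally show ?thesis by simp
qed

lemma continuous_on_modulus:
  fixes f :: "real \<Rightarrow> 'a::metric_space"
  assumes le: "\<And>s t. s \<in> S \<Longrightarrow> t \<in> S \<Longrightarrow> s < t \<Longrightarrow> dist (f t) (f s) \<le> \<omega> (t - s)"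
    and lim: "(\<omega> \<longlongrightarrow> 0) (at_right 0)"
  shows "continuous_on S f"
  unfolding continuous_on_iff
proof (intro ballI allI impI)
  fix x e assume x: "x \<in> S" and e: "(0::real) < e"
  obtain b where b: "b > 0" "\<And>y. y > 0 \<Longrightarrow> y < b \<Longrightarrow> dist (\<omega> y) 0 < e"
    using tendstoD[OF lim e] unfolding eventually_at_right_field by auto
  have "dist (f y) (f x) < e" if y: "y \<in> S" "dist y x < b" for y
  proof -
    consider "y = x" | "x < y" | "y < x" by linarith
    then show ?thesis
    proof cases
      case 2
      then have "dist (f y) (f x) \<le> \<omega> (y - x)" by (rule le[OF x y(1)])
      also have "\<dots> < e" using b(2)[of "y - x"] 2 y(2) by (auto simp: dist_real_def)
      finally show ?thesis .
    next
      case 3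
      then have "dist (f y) (f x) \<le> \<omega> (x - y)" by (subst dist_commute) (rule le[OF y(1) x])
      also have "\<dots> < e" using b(2)[of "x - y"] 3 y(2) by (auto simp: dist_real_def)
      finally show ?thesis .
    qed (use e in simp)
  qed
  then show "\<exists>d>0. \<forall>x'\<in>S. dist x' x < d \<longrightarrow> dist (f x') (f x) < e"
    using b(1) by blast
qed

lemma continuous_on_volterra_int:
  fixes \<phi> :: "real \<Rightarrow> 'a::euclidean_space"
  assumes K: "cond_K_on \<Gamma> T \<eta> \<gamma>" and c: "continuous_on {0..T} \<phi>"
  shows "continuous_on {0..T} (volterra_int \<Gamma> \<phi>)"
proof -
  obtain B where B: "\<And>s. s \<in> {0..T} \<Longrightarrow> norm (\<phi> s) \<le> B"
    using continuous_on_Icc_bound[OF c] by blast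
  have "((\<lambda>\<delta>::real. \<delta> powr (2 * \<gamma>)) \<longlongrightarrow> 0) (at_right 0)"
    using cond_K_on_pos[OF K]
    by (intro tendsto_zero_powrI[where b = "2 * \<gamma>"] tendsto_ident_at tendsto_const)
       (auto simp: eventually_at_right_field)
  then have "((\<lambda>\<delta>. 2 * sqrt (\<eta> * \<delta> powr (2 * \<gamma>) * (T * B\<^sup>2))) \<longlongrightarrow> 2 * sqrt (\<eta> * 0 * (T * B\<^sup>2))) (at_right 0)"
    by (intro tendsto_intros)
  then show ?thesis
    using dist_volterra_int_le[OF K c B]
    by (intro continuous_on_modulus[where \<omega> = "\<lambda>\<delta>. 2 * sqrt (\<eta> * \<delta> powr (2 * \<gamma>) * (T * B\<^sup>2))"]) auto
qed

section \<open>Existence and uniqueness\<close>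

definition volterra_map ::
  "(real \<Rightarrow> real \<Rightarrow> real) \<Rightarrow> real^'d \<Rightarrow> (real \<Rightarrow> real^'d) \<Rightarrow> (real \<Rightarrow> real^'d^'d)
   \<Rightarrow> (real \<Rightarrow> real^'d) \<Rightarrow> real \<Rightarrow> real^'d" where
  "volterra_map \<Gamma> v F G X t = v + volterra_int \<Gamma> (\<lambda>s. F s + G s *v X s) t"

locale linear_volterra =
  fixes \<Gamma> :: "real \<Rightarrow> real \<Rightarrow> real" and T \<eta> \<gamma> :: real
    and v :: "real^'d" and F :: "real \<Rightarrow> real^'d" and G :: "real \<Rightarrow> real^'d^'d"
  assumes K: "cond_K_on \<Gamma> T \<eta> \<gamma>" and cF: "continuous_on {0..T} F" and cG: "continuous_on {0..T} G"
    and T: "0 \<le> T"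
begin

lemma continuous_on_forcing:
  "continuous_on {0..T} X \<Longrightarrow> continuous_on {0..T} (\<lambda>s. F s + G s *v X s)"
  by (intro continuous_intros cF cG)

lemma continuous_on_volterra_map:
  "continuous_on {0..T} X \<Longrightarrow> continuous_on {0..T} (volterra_map \<Gamma> v F G X)"
  unfolding volterra_map_def by (intro continuous_intros continuous_on_volterra_int[OF K] continuous_on_forcing)

lemma volterra_solution_iff_fixed_point:
  assumes "continuous_on {0..T} X"
  shows "volterra_solution \<Gamma> v F G T X \<longleftrightarrow> (\<forall>t\<in>{0..T}. X t = volterra_map \<Gamma> v F G X t)"
  using set_integrable_volterra[OF K continuous_on_forcing[OF assms]]
  unfolding volterra_solution_def volterra_map_def volterra_int_def by auto

lemma G_bounded:
  obtains B where "\<And>s. s \<in> {0..T} \<Longrightarrow> abs_entry_sum (G s) \<le> B"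
proof -
  obtain B where "\<And>s. s \<in> {0..T} \<Longrightarrow> norm (abs_entry_sum (G s)) \<le> B"
    using continuous_on_Icc_bound[OF continuous_on_abs_entry_sum[OF cG]] by blast
  then show ?thesis
    by (intro that[of B]) (simp add: abs_le_iff)
qed

lemma volterra_map_diff_sq_le:
  assumes cX: "continuous_on {0..T} X" and cY: "continuous_on {0..T} Y" and t: "t \<in> {0..T}"
    and B: "\<And>s. s \<in> {0..T} \<Longrightarrow> abs_entry_sum (G s) \<le> B"
  shows "(norm (volterra_map \<Gamma> v F G X t - volterra_map \<Gamma> v F G Y t))\<^sup>2
    \<le> \<eta> * T powr (2 * \<gamma>) * B\<^sup>2 * integral {0..t} (\<lambda>s. (norm (X s - Y s))\<^sup>2)"
proof -
  let ?C = "\<eta> * T powr (2 * \<gamma>)"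
  have C: "0 \<le> ?C" using cond_K_on_pos[OF K] by simp
  have cD: "continuous_on {0..T} (\<lambda>s. G s *v (X s - Y s))"
    by (intro continuous_intros cG cX cY)
  have sub: "{0..t} \<subseteq> {0..T}" using t by auto
  have "volterra_map \<Gamma> v F G X t - volterra_map \<Gamma> v F G Y t = volterra_int \<Gamma> (\<lambda>s. G s *v (X s - Y s)) t"
    using volterra_int_diff[OF K continuous_on_forcing[OF cX] continuous_on_forcing[OF cY] t]
    by (simp add: volterra_map_def matrix_vector_mult_diff_distrib)
  then have "(norm (volterra_map \<Gamma> v F G X t - volterra_map \<Gamma> v F G Y t))\<^sup>2
      \<le> ?C * integral {0..t} (\<lambda>s. (norm (G s *v (X s - Y s)))\<^sup>2)"
    using norm_volterra_int_sq_le[OF K cD t] by simp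
  also have "\<dots> \<le> ?C * integral {0..t} (\<lambda>s. B\<^sup>2 * (norm (X s - Y s))\<^sup>2)"
  proof (intro mult_left_mono[OF _ C] integral_le)
    show "(\<lambda>s. (norm (G s *v (X s - Y s)))\<^sup>2) integrable_on {0..t}"
      by (intro integrable_continuous_interval continuous_intros continuous_on_subset[OF cD sub])
    show "(\<lambda>s. B\<^sup>2 * (norm (X s - Y s))\<^sup>2) integrable_on {0..t}"
      by (intro integrable_continuous_interval continuous_intros
          continuous_on_subset[OF cX sub] continuous_on_subset[OF cY sub])
    fix s assume s: "s \<in> {0..t}"
    have "norm (G s *v (X s - Y s)) \<le> abs_entry_sum (G s) * norm (X s - Y s)"
      by (rule norm_mat_vec_le)
    also have "\<dots> \<le> B * norm (X s - Y s)"
      using B[of s] s t by (intro mult_right_mono) auto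
    finally have "(norm (G s *v (X s - Y s)))\<^sup>2 \<le> (B * norm (X s - Y s))\<^sup>2"
      by (intro power_mono) auto
    then show "(norm (G s *v (X s - Y s)))\<^sup>2 \<le> B\<^sup>2 * (norm (X s - Y s))\<^sup>2"
      by (simp add: power_mult_distrib)
  qed
  finally show ?thesis by (simp add: mult.assoc)
qed

lemma fixed_point_unique:
  assumes cX: "continuous_on {0..T} X" and cY: "continuous_on {0..T} Y"
    and X: "\<And>t. t \<in> {0..T} \<Longrightarrow> X t = volterra_map \<Gamma> v F G X t"
    and Y: "\<And>t. t \<in> {0..T} \<Longrightarrow> Y t = volterra_map \<Gamma> v F G Y t"
    and t: "t \<in> {0..T}"
  shows "X t = Y t"
proof -
  obtain B where B: "\<And>s. s \<in> {0..T} \<Longrightarrow> abs_entry_sum (G s) \<le> B"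
    using G_bounded by blast
  let ?u = "\<lambda>s. (norm (X s - Y s))\<^sup>2" and ?L = "\<eta> * T powr (2 * \<gamma>) * B\<^sup>2"
  have "?u t \<le> 0 * exp (?L * t)"
  proof (rule gronwall_integral)
    show "continuous_on {0..T} ?u" by (intro continuous_intros cX cY)
    show "?u s \<le> 0 + ?L * integral {0..s} ?u" if s: "s \<in> {0..T}" for s
      using volterra_map_diff_sq_le[OF cX cY s B] X[OF s] Y[OF s] by simp
  qed (use cond_K_on_pos[OF K] t in auto)
  then show ?thesis by simp
qed

lemma volterra_map_tendsto:
  assumes cXs: "\<And>n. continuous_on {0..T} (Xs n)" and cX: "continuous_on {0..T} X"
    and lim: "uniform_limit {0..T} Xs X sequentially" and t: "t \<in> {0..T}"
  shows "(\<lambda>n. volterra_map \<Gamma> v F G (Xs n) t) \<longlonglongrightarrow> volterra_map \<Gamma> v F G X t"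
proof (rule tendstoI)
  fix e :: real assume e: "e > 0"
  obtain B where B: "\<And>s. s \<in> {0..T} \<Longrightarrow> abs_entry_sum (G s) \<le> B"
    using G_bounded by blast
  define L where "L = \<eta> * T powr (2 * \<gamma>) * B\<^sup>2"
  have L: "0 \<le> L" using cond_K_on_pos[OF K] unfolding L_def by simp
  then have LT: "0 < L * T + 1" using T by (simp add: add_nonneg_pos)
  define \<delta> where "\<delta> = e / sqrt (L * T + 1)"
  have "\<delta> > 0" unfolding \<delta>_def using e LT by simp
  then have "\<forall>\<^sub>F n in sequentially. \<forall>s\<in>{0..T}. dist (Xs n s) (X s) < \<delta>"
    using lim unfolding uniform_limit_iff by blast
  then show "\<forall>\<^sub>F n in sequentially. dist (volterra_map \<Gamma> v F G (Xs n) t) (volterra_map \<Gamma> v F G X t) < e"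
  proof (rule eventually_mono)
    fix n assume close: "\<forall>s\<in>{0..T}. dist (Xs n s) (X s) < \<delta>"
    have "continuous_on {0..t} (\<lambda>s. Xs n s - X s)"
      using t by (intro continuous_on_subset[OF continuous_on_diff[OF cXs cX]]) auto
    then have "integral {0..t} (\<lambda>s. (norm (Xs n s - X s))\<^sup>2) \<le> (t - 0) * \<delta>\<^sup>2"
      using close t by (intro integral_norm_sq_le) (auto simp: dist_norm less_imp_le)
    also have "\<dots> \<le> T * \<delta>\<^sup>2" using t by (intro mult_right_mono) auto
    finally have I: "integral {0..t} (\<lambda>s. (norm (Xs n s - X s))\<^sup>2) \<le> T * \<delta>\<^sup>2" .
    have "(dist (volterra_map \<Gamma> v F G (Xs n) t) (volterra_map \<Gamma> v F G X t))\<^sup>2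
        \<le> L * integral {0..t} (\<lambda>s. (norm (Xs n s - X s))\<^sup>2)"
      using volterra_map_diff_sq_le[OF cXs cX t B] unfolding dist_norm L_def .
    also have "\<dots> \<le> L * (T * \<delta>\<^sup>2)"
      using I L by (rule mult_left_mono)
    also have "\<dots> = e\<^sup>2 * (L * T / (L * T + 1))"
      unfolding \<delta>_def using LT by (simp add: power_divide)
    also have "\<dots> < e\<^sup>2"
      using LT e by (simp add: divide_less_eq)
    finally show "dist (volterra_map \<Gamma> v F G (Xs n) t) (volterra_map \<Gamma> v F G X t) < e"
      using e by (simp add: power_less_imp_less_base)
  qed
qed

primrec picard_iter :: "nat \<Rightarrow> real \<Rightarrow> real^'d" where
  "picard_iter 0 = (\<lambda>t. v)"
| "picard_iter (Suc n) = volterra_map \<Gamma> v F G (picard_iter n)"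

lemma continuous_on_picard_iter: "continuous_on {0..T} (picard_iter n)"
  by (induction n) (auto intro: continuous_on_volterra_map)

lemma picard_iter_increment_sq_le:
  obtains C L where "0 < C" "0 \<le> L"
    "\<And>n t. t \<in> {0..T} \<Longrightarrow> (norm (picard_iter (Suc n) t - picard_iter n t))\<^sup>2 \<le> C * (L * T)^n / fact n"
proof -
  obtain B where B: "\<And>s. s \<in> {0..T} \<Longrightarrow> abs_entry_sum (G s) \<le> B"
    using G_bounded by blast
  define L where "L = \<eta> * T powr (2 * \<gamma>) * B\<^sup>2"
  have L: "0 \<le> L" using cond_K_on_pos[OF K] unfolding L_def by simp
  define f where "f n t = (norm (picard_iter (Suc n) t - picard_iter n t))\<^sup>2" for n t
  have cf: "continuous_on {0..T} (f n)" for n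
    unfolding f_def by (intro continuous_intros continuous_on_picard_iter)
  obtain C where C: "C > 0" "\<And>t. t \<in> {0..T} \<Longrightarrow> norm (f 0 t) \<le> C"
    using continuous_on_Icc_bound[OF cf] by blast
  have "f n t \<le> C * (L * T)^n / fact n" if t: "t \<in> {0..T}" for n t
  proof -
    have "f n t \<le> 0 * (\<Sum>j<n. (L * t)^j / fact j) + C * (L * t)^n / fact n"
    proof (rule iterated_integral_ineq[OF cf _ _ L order_refl t])
      show "f 0 t \<le> C" if "t \<in> {0..T}" for t using C(2)[OF that] by simp
      show "f (Suc n) t \<le> 0 + L * integral {0..t} (f n)" if "t \<in> {0..T}" for n t
        using volterra_map_diff_sq_le[OF continuous_on_picard_iter continuous_on_picard_iter that B, of "Suc n" n]
        unfolding f_def L_def by simp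
    qed
    also have "\<dots> \<le> C * (L * T)^n / fact n"
      using t L C by (auto intro!: divide_right_mono mult_left_mono power_mono mult_left_mono)
    finally show ?thesis .
  qed
  with C(1) L show ?thesis using that unfolding f_def by blast
qed

text \<open>By AM-GM, \<open>\<surd>(C (L T)\<^sup>n / n!) \<le> (C (4 L T)\<^sup>n / n! + 4\<^sup>-\<^sup>n) / 2\<close>, a summable bound.\<close>

lemma picard_iter_uniform_limit:
  obtains X where "uniform_limit {0..T} picard_iter X sequentially"
proof -
  obtain C L where C: "0 < C" and L: "0 \<le> L"
    and f: "\<And>n t. t \<in> {0..T} \<Longrightarrow> (norm (picard_iter (Suc n) t - picard_iter n t))\<^sup>2 \<le> C * (L * T)^n / fact n"
    using picard_iter_increment_sq_le by blast
  define D where "D n t = picard_iter (Suc n) t - picard_iter n t" for n t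
  define b where "b n = (C * (4 * L * T)^n / fact n + (1/4)^n) / 2" for n
  have Db: "norm (D n t) \<le> b n" if t: "t \<in> {0..T}" for n t
  proof -
    have "(4 * L * T)^n * (1/4)^n = (L * T)^n"
      by (simp flip: power_mult_distrib)
    then have "(norm (D n t))\<^sup>2 \<le> (C * (4 * L * T)^n / fact n) * (1/4)^n"
      using f[OF t, of n] unfolding D_def by (metis (no_types) mult.commute times_divide_eq_left mult.left_commute)
    then have "sqrt ((norm (D n t))\<^sup>2) \<le> sqrt ((C * (4 * L * T)^n / fact n) * (1/4)^n)"
      by (rule real_sqrt_le_mono)
    also have "\<dots> \<le> b n" unfolding b_def
      by (rule arith_geo_mean_sqrt) (use C L T in auto)
    finally show ?thesis by simp
  qed
  have sb: "summable b"
  proof -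
    have s1: "summable (\<lambda>n. C * ((4 * L * T)^n / fact n))"
      using summable_mult[OF sums_summable[OF exp_converges[of "4 * L * T"]], of C]
      by (simp add: divide_inverse_commute)
    have s2: "summable (\<lambda>n. (1/4::real)^n)" by (rule summable_geometric) simp
    show ?thesis
      unfolding b_def using summable_divide[OF summable_add[OF s1 s2], of 2] by simp
  qed
  have "uniform_limit {0..T} (\<lambda>n t. \<Sum>i<n. D i t) (\<lambda>t. \<Sum>i. D i t) sequentially"
    by (rule Weierstrass_m_test[OF Db sb])
  moreover have "(\<Sum>i<n. D i t) = picard_iter n t - v" for n t
    unfolding D_def by (subst sum_lessThan_telescope) simp
  ultimately have "uniform_limit {0..T} picard_iter (\<lambda>t. v + (\<Sum>i. D i t)) sequentially"
    unfolding uniform_limit_iff dist_norm by (simp add: algebra_simps)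
  then show ?thesis by (rule that)
qed

lemma fixed_point_exists:
  obtains X where "continuous_on {0..T} X" and "\<And>t. t \<in> {0..T} \<Longrightarrow> X t = volterra_map \<Gamma> v F G X t"
proof -
  obtain X where lim: "uniform_limit {0..T} picard_iter X sequentially"
    using picard_iter_uniform_limit by blast
  have cX: "continuous_on {0..T} X"
    by (rule uniform_limit_theorem[OF _ lim]) (auto intro: continuous_on_picard_iter always_eventually)
  have "X t = volterra_map \<Gamma> v F G X t" if t: "t \<in> {0..T}" for t
  proof (rule LIMSEQ_unique)
    show "(\<lambda>n. picard_iter (Suc n) t) \<longlonglongrightarrow> X t"
      using LIMSEQ_Suc[OF tendsto_uniform_limitI[OF lim t]] .
    show "(\<lambda>n. picard_iter (Suc n) t) \<longlonglongrightarrow> volterra_map \<Gamma> v F G X t"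
      using volterra_map_tendsto[OF continuous_on_picard_iter cX lim t] by simp
  qed
  with cX show ?thesis using that by blast
qed


lemma volterra_solution_exists: "\<exists>X. continuous_on {0..T} X \<and> volterra_solution \<Gamma> v F G T X"
proof -
  obtain X where "continuous_on {0..T} X" "\<And>t. t \<in> {0..T} \<Longrightarrow> X t = volterra_map \<Gamma> v F G X t"
    by (rule fixed_point_exists) blast
  then show ?thesis using volterra_solution_iff_fixed_point by blast
qed

lemma volterra_solution_unique:
  assumes "continuous_on {0..T} X1" "volterra_solution \<Gamma> v F G T X1"
    and "continuous_on {0..T} X2" "volterra_solution \<Gamma> v F G T X2" and "t \<in> {0..T}"
  shows "X1 t = X2 t"
  using assms fixed_point_unique volterra_solution_iff_fixed_point by blast

end

section \<open>Kernels satisfying (P)\<close>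

lemma preserves_nonnegD:
  assumes "preserves_nonneg \<Gamma>"
    and "\<And>k. k < K \<Longrightarrow> 0 \<le> tt k \<and> tt k < T" "\<And>k. Suc k < K \<Longrightarrow> tt k < tt (Suc k)"
    and "\<And>k. k < K \<Longrightarrow> 0 \<le> (\<Sum>k'\<le>k. x k' * \<Gamma> (tt k) (tt k'))" and "t \<in> {0..T}"
  shows "0 \<le> (\<Sum>k\<in>{k. k < K \<and> tt k \<le> t}. x k * \<Gamma> t (tt k))"
proof -
  have "(\<forall>k<K. 0 \<le> tt k \<and> tt k < T) \<and> (\<forall>k. Suc k < K \<longrightarrow> tt k < tt (Suc k)) \<and>
      (\<forall>k<K. 0 \<le> (\<Sum>k'\<le>k. x k' * \<Gamma> (tt k) (tt k')))"
    using assms(2-4) by blast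
  then show ?thesis using assms(1,5) unfolding preserves_nonneg_def by blast
qed

context
  fixes \<Gamma> :: "real \<Rightarrow> real \<Rightarrow> real"
  assumes P: "cond_P \<Gamma>"
begin

lemma cond_P_nonneg: "0 \<le> s \<Longrightarrow> s \<le> t \<Longrightarrow> 0 \<le> \<Gamma> t s"
  using P unfolding cond_P_def Delta_def by blast

lemma cond_P_diag_pos: "0 \<le> s \<Longrightarrow> 0 < \<Gamma> s s"
  using P unfolding cond_P_def by blast

lemma cond_P_antimono: "0 \<le> s \<Longrightarrow> s \<le> t1 \<Longrightarrow> t1 \<le> t2 \<Longrightarrow> \<Gamma> t2 s \<le> \<Gamma> t1 s"
  using P unfolding cond_P_def by blast

lemma cond_P_preserves_nonneg: "preserves_nonneg \<Gamma>"
  using P unfolding cond_P_def by blast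

lemma continuous_on_cond_P_triangle:
  "continuous_on {p. 0 \<le> snd p \<and> snd p \<le> fst p \<and> fst p \<le> T} (\<lambda>p. \<Gamma> (fst p) (snd p))"
proof (rule continuous_on_subset)
  show "continuous_on Delta (\<lambda>p. \<Gamma> (fst p) (snd p))"
    using P unfolding cond_P_def by (simp add: case_prod_beta')
qed (auto simp: Delta_def)

lemma continuous_on_cond_P_slice:
  assumes "0 \<le> t"
  shows "continuous_on {0..t} (\<Gamma> t)"
proof -
  have "continuous_on {0..t} (\<lambda>s. (\<lambda>p. \<Gamma> (fst p) (snd p)) (t, s))"
    by (rule continuous_on_compose2[OF continuous_on_cond_P_triangle[of t]]) (auto intro: continuous_intros)
  then show ?thesis by simp
qed

end

lemma compact_triangle: "compact {p :: real \<times> real. 0 \<le> snd p \<and> snd p \<le> fst p \<and> fst p \<le> T}"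
proof -
  have "{p :: real \<times> real. 0 \<le> snd p \<and> snd p \<le> fst p \<and> fst p \<le> T} = ({0..T} \<times> {0..T}) \<inter> {p. snd p \<le> fst p}"
    by auto
  then show ?thesis
    by (simp only:) (intro compact_Int_closed compact_Times compact_Icc closed_Collect_le continuous_intros)
qed

context
  fixes \<Gamma> :: "real \<Rightarrow> real \<Rightarrow> real" and T :: real
  assumes P: "cond_P \<Gamma>"
begin

lemma cond_P_bounded:
  obtains B where "B > 0" "\<And>t s. 0 \<le> s \<Longrightarrow> s \<le> t \<Longrightarrow> t \<le> T \<Longrightarrow> \<Gamma> t s \<le> B"
proof -
  let ?D = "{p :: real \<times> real. 0 \<le> snd p \<and> snd p \<le> fst p \<and> fst p \<le> T}"
  have "bounded ((\<lambda>p. \<Gamma> (fst p) (snd p)) ` ?D)"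
    by (intro compact_imp_bounded compact_continuous_image continuous_on_cond_P_triangle[OF P] compact_triangle)
  then obtain B where "B > 0" "\<And>p. p \<in> ?D \<Longrightarrow> norm (\<Gamma> (fst p) (snd p)) \<le> B"
    unfolding bounded_pos by auto
  then show ?thesis using that[of B] by force
qed

lemma cond_P_uniformly_continuous:
  fixes \<phi> :: "real \<Rightarrow> 'a::real_normed_vector"
  assumes \<phi>: "continuous_on {0..T} \<phi>" and e: "e > 0"
  obtains \<delta> where "\<delta> > 0" "\<And>t s s'. 0 \<le> s \<Longrightarrow> s \<le> t \<Longrightarrow> t \<le> T \<Longrightarrow> 0 \<le> s' \<Longrightarrow> s' \<le> t \<Longrightarrow>
    \<bar>s - s'\<bar> < \<delta> \<Longrightarrow> norm (\<Gamma> t s *\<^sub>R \<phi> s - \<Gamma> t s' *\<^sub>R \<phi> s') < e"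
proof -
  let ?D = "{p :: real \<times> real. 0 \<le> snd p \<and> snd p \<le> fst p \<and> fst p \<le> T}"
  have "continuous_on ?D (\<lambda>p. \<phi> (snd p))"
    by (rule continuous_on_compose2[OF \<phi> continuous_on_snd]) auto
  then have "continuous_on ?D (\<lambda>p. \<Gamma> (fst p) (snd p) *\<^sub>R \<phi> (snd p))"
    by (intro continuous_intros continuous_on_cond_P_triangle[OF P])
  then have "uniformly_continuous_on ?D (\<lambda>p. \<Gamma> (fst p) (snd p) *\<^sub>R \<phi> (snd p))"
    by (rule compact_uniformly_continuous[OF _ compact_triangle])
  then obtain \<delta> where \<delta>: "\<delta> > 0" "\<And>p p'. p \<in> ?D \<Longrightarrow> p' \<in> ?D \<Longrightarrow> dist p' p < \<delta> \<Longrightarrow>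
      dist (\<Gamma> (fst p') (snd p') *\<^sub>R \<phi> (snd p')) (\<Gamma> (fst p) (snd p) *\<^sub>R \<phi> (snd p)) < e"
    using e unfolding uniformly_continuous_on_def by blast
  have "norm (\<Gamma> t s *\<^sub>R \<phi> s - \<Gamma> t s' *\<^sub>R \<phi> s') < e"
    if "0 \<le> s" "s \<le> t" "t \<le> T" "0 \<le> s'" "s' \<le> t" "\<bar>s - s'\<bar> < \<delta>" for t s s'
    using \<delta>(2)[of "(t, s')" "(t, s)"] that by (simp add: dist_Pair_Pair dist_real_def dist_norm)
  with \<delta>(1) show ?thesis using that by blast
qed

lemma volterra_int_cond_P:
  fixes \<phi> :: "real \<Rightarrow> 'a::euclidean_space"
  assumes \<phi>: "continuous_on {0..t} \<phi>" and t: "0 \<le> t"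
  shows "volterra_int \<Gamma> \<phi> t = integral {0..t} (\<lambda>s. \<Gamma> t s *\<^sub>R \<phi> s)"
proof -
  have "continuous_on {0..t} (\<lambda>s. \<Gamma> t s *\<^sub>R \<phi> s)"
    by (intro continuous_intros continuous_on_cond_P_slice[OF P t] \<phi>)
  then have "set_integrable lborel {0..t} (\<lambda>s. \<Gamma> t s *\<^sub>R \<phi> s)"
    unfolding set_integrable_def by (rule borel_integrable_compact[OF compact_Icc])
  then show ?thesis
    unfolding volterra_int_def by (rule set_borel_integral_eq_integral(2))
qed

lemma cond_P_measurable:
  assumes "0 \<le> t"
  shows "set_borel_measurable lborel {0..t} (\<Gamma> t)"
  unfolding set_borel_measurable_def
  using borel_measurable_continuous_on_indicator[OF _ continuous_on_cond_P_slice[OF P assms]] by simp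

end

section \<open>A nonnegative discretisation\<close>

text \<open>The weights \<open>\<rho>\<^sub>j \<ge> 0\<close> with \<open>\<Sum>\<^sub>j\<^sub>\<le>\<^sub>k \<rho>\<^sub>j \<Gamma>(t\<^sub>k,t\<^sub>j) = 1\<close> spread \<open>v\<close> over the steps, so that the
  scheme reads \<open>S\<^sub>k = \<Sum>\<^sub>j\<^sub>\<le>\<^sub>k \<Gamma>(t\<^sub>k,t\<^sub>j) x\<^sub>j\<close> with \<open>x\<^sub>j = \<rho>\<^sub>j v + h (F(t\<^sub>j) + G(t\<^sub>j) S\<^sub>j)\<close>. In this form
  nonnegativity of the \<open>S\<^sub>j\<close>, \<open>j < k\<close>, passes to the part of \<open>S\<^sub>k\<close> with \<open>j < k\<close> because \<open>\<Gamma>\<close>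
  preserves nonnegativity, and the diagonal term leaves a linear equation for \<open>S\<^sub>k\<close> with
  a Metzler matrix.\<close>

locale discrete_scheme =
  fixes \<Gamma> :: "real \<Rightarrow> real \<Rightarrow> real" and T h :: real
    and v :: "real^'d" and F :: "real \<Rightarrow> real^'d" and G :: "real \<Rightarrow> real^'d^'d"
  assumes P: "cond_P \<Gamma>" and h: "h > 0"
    and small_step: "\<And>t. t \<in> {0..T} \<Longrightarrow> 2 * (\<Gamma> t t * h * abs_entry_sum (G t)) < 1"
    and v_nonneg: "\<And>i. 0 \<le> v $ i"
    and F_nonneg: "\<And>t i. t \<in> {0..T} \<Longrightarrow> 0 \<le> F t $ i"
    and G_metzler: "\<And>t i j. t \<in> {0..T} \<Longrightarrow> i \<noteq> j \<Longrightarrow> 0 \<le> G t $ i $ j"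
begin

definition grid :: "nat \<Rightarrow> real" where
  "grid k = real k * h"

definition weight :: "nat \<Rightarrow> real" where
  "weight = wfrec less_than (\<lambda>w k. (1 - (\<Sum>j<k. w j * \<Gamma> (grid k) (grid j))) / \<Gamma> (grid k) (grid k))"

definition step_input :: "nat \<Rightarrow> real^'d \<Rightarrow> real^'d" where
  "step_input j y = weight j *\<^sub>R v + h *\<^sub>R (F (grid j) + G (grid j) *v y)"

definition explicit_part :: "nat \<Rightarrow> (nat \<Rightarrow> real^'d) \<Rightarrow> real^'d" where
  "explicit_part k S = (\<Sum>j<k. \<Gamma> (grid k) (grid j) *\<^sub>R step_input j (S j))
     + \<Gamma> (grid k) (grid k) *\<^sub>R (weight k *\<^sub>R v + h *\<^sub>R F (grid k))"

definition scheme :: "nat \<Rightarrow> real^'d" where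
  "scheme = wfrec less_than
     (\<lambda>S k. resolvent (\<Gamma> (grid k) (grid k) * h) (G (grid k)) (explicit_part k S))"

lemma grid_nonneg: "0 \<le> grid k"
  using h unfolding grid_def by simp

lemma grid_mono: "j \<le> k \<Longrightarrow> grid j \<le> grid k"
  using h unfolding grid_def by (simp add: mult_right_mono)

lemma grid_strict_mono: "j < k \<Longrightarrow> grid j < grid k"
  using h unfolding grid_def by simp

lemma diag_pos: "0 < \<Gamma> (grid k) (grid k)"
  by (rule cond_P_diag_pos[OF P grid_nonneg])

lemma weight_eq: "weight k = (1 - (\<Sum>j<k. weight j * \<Gamma> (grid k) (grid j))) / \<Gamma> (grid k) (grid k)"
  unfolding weight_def by (rule wfrec_less_than) (auto intro!: sum.cong)

lemma weight_sum: "(\<Sum>j\<le>k. weight j * \<Gamma> (grid k) (grid j)) = 1"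
  using weight_eq[of k] diag_pos[of k] by (simp add: lessThan_Suc_atMost[symmetric] field_simps)

text \<open>Since \<open>\<Gamma>(\<cdot>,s)\<close> is nonincreasing, the sum defining \<open>\<rho>\<^sub>k\<close> is at most the previous one, which is \<open>1\<close>.\<close>

lemma weight_nonneg: "0 \<le> weight k"
proof (induction k rule: less_induct)
  case (less k)
  show ?case
  proof (cases k)
    case 0 then show ?thesis using diag_pos[of 0] by (subst weight_eq) simp
  next
    case (Suc m)
    have "(\<Sum>j<k. weight j * \<Gamma> (grid k) (grid j)) \<le> (\<Sum>j\<le>m. weight j * \<Gamma> (grid m) (grid j))"
      unfolding Suc lessThan_Suc_atMost
    proof (rule sum_mono)
      fix j assume "j \<in> {..m}"
      then show "weight j * \<Gamma> (grid (Suc m)) (grid j) \<le> weight j * \<Gamma> (grid m) (grid j)"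
        using less.IH[of j] Suc
        by (intro mult_left_mono cond_P_antimono[OF P grid_nonneg grid_mono grid_mono]) auto
    qed
    then show ?thesis
      using weight_sum[of m] diag_pos[of k] by (subst weight_eq) simp
  qed
qed

lemma scheme_eq: "scheme k = resolvent (\<Gamma> (grid k) (grid k) * h) (G (grid k)) (explicit_part k scheme)"
  unfolding scheme_def
proof (rule wfrec_less_than)
  fix S S' :: "nat \<Rightarrow> real^'d" and k assume "\<And>j. j < k \<Longrightarrow> S j = S' j"
  then have "explicit_part k S = explicit_part k S'"
    unfolding explicit_part_def by (auto intro!: sum.cong)
  then show "resolvent (\<Gamma> (grid k) (grid k) * h) (G (grid k)) (explicit_part k S)
      = resolvent (\<Gamma> (grid k) (grid k) * h) (G (grid k)) (explicit_part k S')" by simp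
qed

context
  fixes k assumes k: "grid k \<le> T"
begin

lemma step_small: "0 \<le> \<Gamma> (grid k) (grid k) * h" "2 * (\<Gamma> (grid k) (grid k) * h * abs_entry_sum (G (grid k))) < 1"
  using small_step[of "grid k"] diag_pos[of k] h grid_nonneg[of k] k by auto

lemma scheme_implicit:
  "scheme k = explicit_part k scheme + (\<Gamma> (grid k) (grid k) * h) *\<^sub>R (G (grid k) *v scheme k)"
proof -
  have "\<Gamma> (grid k) (grid k) * h * abs_entry_sum (G (grid k)) < 1"
    using step_small mult_nonneg_nonneg[OF step_small(1) abs_entry_sum_nonneg] by linarith
  then show ?thesis
    using resolvent_eq[OF step_small(1)] by (subst (1 2) scheme_eq) blast
qed

lemma scheme_as_combination: "scheme k = (\<Sum>j\<le>k. \<Gamma> (grid k) (grid j) *\<^sub>R step_input j (scheme j))"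
  using scheme_implicit
  by (simp add: lessThan_Suc_atMost[symmetric] explicit_part_def step_input_def scaleR_add_right algebra_simps)

lemma scheme_riemann_sum:
  "scheme k = v + h *\<^sub>R (\<Sum>j\<le>k. \<Gamma> (grid k) (grid j) *\<^sub>R (F (grid j) + G (grid j) *v scheme j))"
proof -
  have "(\<Sum>j\<le>k. (weight j * \<Gamma> (grid k) (grid j)) *\<^sub>R v) = v"
    using weight_sum[of k] by (simp flip: scaleR_sum_left)
  then show ?thesis
    unfolding scheme_as_combination step_input_def
    by (simp add: scaleR_add_right sum.distrib scaleR_sum_right algebra_simps)
qed

end

lemma scheme_nonneg: "grid k \<le> T \<Longrightarrow> 0 \<le> scheme k $ i"
proof (induction k arbitrary: i rule: less_induct)
  case (less k)
  have k: "grid k \<in> {0..T}" using less.prems grid_nonneg[of k] by simp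
  let ?x = "\<lambda>i j. step_input j (scheme j) $ i"
  have past: "0 \<le> (\<Sum>j<k. ?x i j * \<Gamma> (grid k) (grid j))" for i
  proof -
    have "0 \<le> (\<Sum>j\<in>{j. j < k \<and> grid j \<le> grid k}. ?x i j * \<Gamma> (grid k) (grid j))"
    proof (rule preserves_nonnegD[OF cond_P_preserves_nonneg[OF P] _ _ _ k])
      fix j assume j: "j < k"
      show "0 \<le> grid j \<and> grid j < T" using grid_nonneg grid_strict_mono[OF j] less.prems by simp
      have "grid j \<le> T" using grid_mono[of j k] j less.prems by simp
      then show "0 \<le> (\<Sum>j'\<le>j. ?x i j' * \<Gamma> (grid j) (grid j'))"
        using less.IH[OF j] scheme_as_combination[of j] by (simp add: mult.commute)
    qed (simp add: grid_strict_mono)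
    moreover have "{j. j < k \<and> grid j \<le> grid k} = {..<k}" using grid_mono by auto
    ultimately show ?thesis by simp
  qed
  have "0 \<le> explicit_part k scheme $ i" for i
    using past[of i] diag_pos[of k] weight_nonneg[of k] v_nonneg F_nonneg[OF k] h
    by (simp add: explicit_part_def step_input_def mult.commute)
  then show ?case
    using resolvent_nonneg[OF step_small[OF less.prems] G_metzler[OF k]] by (subst scheme_eq) blast
qed

context
  fixes X :: "real \<Rightarrow> real^'d" and B\<Gamma> BG B\<phi> e :: real
  assumes X_eq: "\<And>t. t \<in> {0..T} \<Longrightarrow> X t = v + integral {0..t} (\<lambda>s. \<Gamma> t s *\<^sub>R (F s + G s *v X s))"
    and c\<phi>: "continuous_on {0..T} (\<lambda>s. F s + G s *v X s)"
    and B\<Gamma>: "\<And>t s. 0 \<le> s \<Longrightarrow> s \<le> t \<Longrightarrow> t \<le> T \<Longrightarrow> \<Gamma> t s \<le> B\<Gamma>"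
    and BG: "\<And>t. t \<in> {0..T} \<Longrightarrow> abs_entry_sum (G t) \<le> BG"
    and B\<phi>: "\<And>t. t \<in> {0..T} \<Longrightarrow> norm (F t + G t *v X t) \<le> B\<phi>"
    and hB: "h * B\<Gamma> * BG \<le> 1/2"
    and e: "0 \<le> e"
    and osc: "\<And>t s s'. 0 \<le> s \<Longrightarrow> s \<le> t \<Longrightarrow> t \<le> T \<Longrightarrow> 0 \<le> s' \<Longrightarrow> s' \<le> t \<Longrightarrow> \<bar>s - s'\<bar> \<le> h \<Longrightarrow>
        norm (\<Gamma> t s *\<^sub>R (F s + G s *v X s) - \<Gamma> t s' *\<^sub>R (F s' + G s' *v X s')) \<le> e"
begin

lemma scheme_riemann_error:
  assumes k: "grid k \<le> T"
  defines "f \<equiv> \<lambda>s. \<Gamma> (grid k) s *\<^sub>R (F s + G s *v X s)"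
  shows "norm (integral {0..grid k} f - h *\<^sub>R (\<Sum>j<k. f (grid j))) \<le> T * e"
proof -
  have t: "0 \<le> grid k" "grid k \<le> T" using grid_nonneg k by auto
  have "continuous_on {0..grid k} (\<lambda>s. F s + G s *v X s)"
    using continuous_on_subset[OF c\<phi>] t by auto
  then have cf: "continuous_on {0..grid k} f"
    unfolding f_def by (rule continuous_on_scaleR[OF continuous_on_cond_P_slice[OF P t(1)]])
  have "norm (integral {0..real k * h} f - h *\<^sub>R (\<Sum>j<k. f (real j * h))) \<le> real k * h * e"
  proof (rule riemann_sum_error[OF h])
    show "continuous_on {0..real k * h} f" using cf unfolding grid_def .
    fix j s assume j: "j < k" and s: "s \<in> {real j * h..real (Suc j) * h}"
    have "real (Suc j) * h \<le> grid k" using j h unfolding grid_def by (intro mult_right_mono) auto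
    moreover have "0 \<le> real j * h" using h by simp
    moreover from this have "0 \<le> s" using s by auto
    ultimately show "norm (f s - f (real j * h)) \<le> e"
      unfolding f_def using s t by (intro osc) (auto simp: algebra_simps)
  qed
  also have "\<dots> \<le> T * e" using k e unfolding grid_def by (intro mult_right_mono) auto
  finally show ?thesis unfolding grid_def .
qed

lemma scheme_error_eq:
  assumes k: "grid k \<le> T"
  defines "f \<equiv> \<lambda>s. \<Gamma> (grid k) s *\<^sub>R (F s + G s *v X s)"
  shows "X (grid k) - scheme k = (integral {0..grid k} f - h *\<^sub>R (\<Sum>j<k. f (grid j))) - h *\<^sub>R f (grid k)
    + h *\<^sub>R (\<Sum>j\<le>k. \<Gamma> (grid k) (grid j) *\<^sub>R (G (grid j) *v (X (grid j) - scheme j)))"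
proof -
  define E where "E = (\<Sum>j\<le>k. \<Gamma> (grid k) (grid j) *\<^sub>R (G (grid j) *v (X (grid j) - scheme j)))"
  have "scheme k = v + h *\<^sub>R (\<Sum>j\<le>k. f (grid j) - \<Gamma> (grid k) (grid j) *\<^sub>R (G (grid j) *v (X (grid j) - scheme j)))"
    unfolding scheme_riemann_sum[OF k] f_def by (simp add: matrix_vector_mult_diff_distrib algebra_simps)
  also have "\<dots> = v + h *\<^sub>R ((\<Sum>j<k. f (grid j)) + f (grid k) - E)"
    unfolding E_def by (simp add: sum_subtractf lessThan_Suc_atMost[symmetric])
  finally have S: "scheme k = v + h *\<^sub>R ((\<Sum>j<k. f (grid j)) + f (grid k) - E)" .
  have X: "X (grid k) = v + integral {0..grid k} f"
    using X_eq[of "grid k"] grid_nonneg[of k] k unfolding f_def by simp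
  show ?thesis
    unfolding E_def[symmetric] X S by (simp add: algebra_simps scaleR_diff_right scaleR_add_right)
qed

lemma scheme_error_step:
  assumes k: "grid k \<le> T"
  shows "norm (X (grid k) - scheme k)
    \<le> (T * e + h * B\<Gamma> * B\<phi>) + h * B\<Gamma> * BG * (\<Sum>j\<le>k. norm (X (grid j) - scheme j))"
proof -
  define t where "t = grid k"
  define f where "f s = \<Gamma> t s *\<^sub>R (F s + G s *v X s)" for s
  define err where "err j = X (grid j) - scheme j" for j
  have t: "0 \<le> t" "t \<le> T" using grid_nonneg k unfolding t_def by auto
  have B\<Gamma>0: "0 \<le> B\<Gamma>" using B\<Gamma>[OF t(1) order_refl t(2)] cond_P_nonneg[OF P t(1) order_refl] by simp
  have "norm (X t - scheme k) \<le> norm (integral {0..t} f - h *\<^sub>R (\<Sum>j<k. f (grid j)))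
      + norm (h *\<^sub>R f t) + norm (h *\<^sub>R (\<Sum>j\<le>k. \<Gamma> t (grid j) *\<^sub>R (G (grid j) *v err j)))"
    unfolding scheme_error_eq[OF k] t_def f_def err_def
    by (rule order_trans[OF norm_triangle_ineq add_right_mono[OF norm_triangle_ineq4]])
  moreover have "norm (h *\<^sub>R f t) \<le> h * B\<Gamma> * B\<phi>"
  proof -
    have "norm (f t) \<le> B\<Gamma> * B\<phi>"
      unfolding f_def using B\<Gamma>[OF t(1) order_refl t(2)] cond_P_nonneg[OF P t(1) order_refl] B\<phi>[of t] t
      by (auto intro!: mult_mono)
    then show ?thesis using h by (simp add: mult.assoc mult_left_mono)
  qed
  moreover have "norm (h *\<^sub>R (\<Sum>j\<le>k. \<Gamma> t (grid j) *\<^sub>R (G (grid j) *v err j))) \<le> h * B\<Gamma> * BG * (\<Sum>j\<le>k. norm (err j))"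
  proof -
    have "norm (\<Gamma> t (grid j) *\<^sub>R (G (grid j) *v err j)) \<le> B\<Gamma> * BG * norm (err j)" if j: "j \<le> k" for j
    proof -
      have tj: "0 \<le> grid j" "grid j \<le> t" using grid_mono[OF j] grid_nonneg[of j] unfolding t_def by auto
      have "\<bar>\<Gamma> t (grid j)\<bar> \<le> B\<Gamma>"
        using B\<Gamma>[OF tj t(2)] cond_P_nonneg[OF P tj] by simp
      moreover have "norm (G (grid j) *v err j) \<le> BG * norm (err j)"
        using norm_mat_vec_le[of "G (grid j)" "err j"] BG[of "grid j"] tj t
        by (meson atLeastAtMost_iff mult_right_mono norm_ge_zero order_trans)
      ultimately show ?thesis
        using B\<Gamma>0 by (simp add: mult.assoc mult_mono)
    qed
    then have "(\<Sum>j\<le>k. norm (\<Gamma> t (grid j) *\<^sub>R (G (grid j) *v err j))) \<le> (\<Sum>j\<le>k. B\<Gamma> * BG * norm (err j))"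
      by (intro sum_mono) simp
    then have "norm (\<Sum>j\<le>k. \<Gamma> t (grid j) *\<^sub>R (G (grid j) *v err j)) \<le> B\<Gamma> * BG * (\<Sum>j\<le>k. norm (err j))"
      by (simp add: sum_distrib_left order_trans[OF norm_sum])
    then show ?thesis using h by (simp add: mult.assoc mult_left_mono)
  qed
  ultimately show ?thesis
    using scheme_riemann_error[OF k] unfolding err_def t_def f_def by linarith
qed

lemma scheme_error:
  assumes k: "grid k \<le> T"
  shows "norm (X (grid k) - scheme k) \<le> 2 * (T * e + h * B\<Gamma> * B\<phi>) * exp (2 * B\<Gamma> * BG * T)"
proof -
  have T: "0 \<le> T" using grid_nonneg k by (rule order_trans)
  have B\<Gamma>0: "0 < B\<Gamma>" using B\<Gamma>[OF order_refl order_refl T] cond_P_diag_pos[OF P, of 0] by simp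
  have BG0: "0 \<le> BG" using BG[of 0] abs_entry_sum_nonneg[of "G 0"] T by simp
  have B\<phi>0: "0 \<le> B\<phi>" using B\<phi>[of 0] T by (simp add: order_trans[OF norm_ge_zero])
  let ?q = "T * e + h * B\<Gamma> * B\<phi>" and ?r = "h * B\<Gamma> * BG"
  have q: "0 \<le> ?q" using T e h B\<Gamma>0 B\<phi>0 by simp
  have r: "0 \<le> ?r" using h B\<Gamma>0 BG0 by simp
  have "norm (X (grid k) - scheme k) \<le> 2 * ?q * (1 + 2 * ?r)^k"
  proof (rule discrete_gronwall[where a = "\<lambda>j. norm (X (grid j) - scheme j)" and N = k])
    show "norm (X (grid j) - scheme j) \<le> ?q + ?r * (\<Sum>i\<le>j. norm (X (grid i) - scheme i))" if "j \<le> k" for j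
      using scheme_error_step grid_mono[OF that] k by auto
  qed (use q r hB in auto)
  also have "(1 + 2 * ?r)^k \<le> exp (2 * ?r) ^ k"
    using r by (intro power_mono) auto
  also have "\<dots> = exp (2 * B\<Gamma> * BG * grid k)"
    by (simp add: grid_def algebra_simps flip: exp_of_nat_mult)
  also have "\<dots> \<le> exp (2 * B\<Gamma> * BG * T)"
    using B\<Gamma>0 BG0 k by (simp add: mult_left_mono)
  finally show ?thesis using q by (simp add: mult_left_mono)
qed

end

end

context
  fixes \<Gamma> :: "real \<Rightarrow> real \<Rightarrow> real" and T :: real and v :: "real^'d"
    and F :: "real \<Rightarrow> real^'d" and G :: "real \<Rightarrow> real^'d^'d" and X :: "real \<Rightarrow> real^'d"
  assumes P: "cond_P \<Gamma>" and T: "T > 0"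
    and cF: "continuous_on {0..T} F" and cG: "continuous_on {0..T} G"
    and v: "\<And>i. 0 \<le> v $ i" and F: "\<And>t i. t \<in> {0..T} \<Longrightarrow> 0 \<le> F t $ i"
    and G: "\<And>t i j. t \<in> {0..T} \<Longrightarrow> i \<noteq> j \<Longrightarrow> 0 \<le> G t $ i $ j"
    and cX: "continuous_on {0..T} X" and X: "\<And>t. t \<in> {0..T} \<Longrightarrow> X t = volterra_map \<Gamma> v F G X t"
begin

lemma discrete_scheme_small_step:
  assumes h: "0 < h" and B\<Gamma>: "\<And>t s. 0 \<le> s \<Longrightarrow> s \<le> t \<Longrightarrow> t \<le> T \<Longrightarrow> \<Gamma> t s \<le> B\<Gamma>"
    and BG: "\<And>t. t \<in> {0..T} \<Longrightarrow> abs_entry_sum (G t) \<le> BG" and hB: "h * B\<Gamma> * BG < 1/2"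
  shows "discrete_scheme \<Gamma> T h v F G"
proof
  show "2 * (\<Gamma> t t * h * abs_entry_sum (G t)) < 1" if "t \<in> {0..T}" for t
  proof -
    have "\<Gamma> t t * h * abs_entry_sum (G t) \<le> B\<Gamma> * h * BG"
      using B\<Gamma>[of t t] BG[OF that] that h cond_P_nonneg[OF P, of t t] abs_entry_sum_nonneg
      by (intro mult_mono) auto
    then show ?thesis using hB by (simp add: mult_ac)
  qed
qed (use P h v F G in auto)

lemma scheme_converges:
  assumes \<epsilon>: "\<epsilon> > 0"
  obtains h0 where "h0 > 0" and "\<And>h. 0 < h \<Longrightarrow> h < h0 \<Longrightarrow> discrete_scheme \<Gamma> T h v F G"
    and "\<And>h k. 0 < h \<Longrightarrow> h < h0 \<Longrightarrow> discrete_scheme.grid h k \<le> T \<Longrightarrow>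
      norm (X (discrete_scheme.grid h k) - discrete_scheme.scheme \<Gamma> h v F G k) < \<epsilon>"
proof -
  define \<phi> where "\<phi> s = F s + G s *v X s" for s
  have c\<phi>: "continuous_on {0..T} \<phi>" unfolding \<phi>_def by (intro continuous_intros cF cG cX)
  have X_eq: "X t = v + integral {0..t} (\<lambda>s. \<Gamma> t s *\<^sub>R (F s + G s *v X s))" if "t \<in> {0..T}" for t
    using X[OF that] volterra_int_cond_P[OF P continuous_on_subset[OF c\<phi>]] that
    unfolding volterra_map_def \<phi>_def by auto
  obtain B\<Gamma> where B\<Gamma>: "B\<Gamma> > 0" "\<And>t s. 0 \<le> s \<Longrightarrow> s \<le> t \<Longrightarrow> t \<le> T \<Longrightarrow> \<Gamma> t s \<le> B\<Gamma>"
    using cond_P_bounded[OF P] by blast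
  obtain BG where BG: "BG > 0" "\<And>t. t \<in> {0..T} \<Longrightarrow> norm (abs_entry_sum (G t)) \<le> BG"
    using continuous_on_Icc_bound[OF continuous_on_abs_entry_sum[OF cG]] by blast
  have BG': "abs_entry_sum (G t) \<le> BG" if "t \<in> {0..T}" for t
    using BG(2)[OF that] by simp
  obtain B\<phi> where B\<phi>: "B\<phi> > 0" "\<And>t. t \<in> {0..T} \<Longrightarrow> norm (F t + G t *v X t) \<le> B\<phi>"
    using continuous_on_Icc_bound[OF c\<phi>] unfolding \<phi>_def by blast
  define E where "E = exp (2 * B\<Gamma> * BG * T)"
  have E: "E \<ge> 1" unfolding E_def using B\<Gamma> BG T by simp
  define e where "e = \<epsilon> / (8 * E * (T + 1))"
  have e: "e > 0"
    unfolding e_def using \<epsilon> E T by simp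
  have eE: "2 * (T * e) * E \<le> \<epsilon> / 4"
  proof -
    have "e * (8 * E * (T + 1)) = \<epsilon>" unfolding e_def using E T by simp
    moreover have "0 \<le> e * E" using e E by simp
    ultimately show ?thesis by (auto simp: algebra_simps)
  qed
  obtain \<delta> where \<delta>: "\<delta> > 0" "\<And>t s s'. 0 \<le> s \<Longrightarrow> s \<le> t \<Longrightarrow> t \<le> T \<Longrightarrow> 0 \<le> s' \<Longrightarrow> s' \<le> t \<Longrightarrow>
      \<bar>s - s'\<bar> < \<delta> \<Longrightarrow> norm (\<Gamma> t s *\<^sub>R \<phi> s - \<Gamma> t s' *\<^sub>R \<phi> s') < e"
    using cond_P_uniformly_continuous[OF P c\<phi> e] by blast
  define h0 where "h0 = min \<delta> (min (1 / (4 * B\<Gamma> * BG)) (\<epsilon> / (4 * B\<Gamma> * B\<phi> * E)))"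
  show ?thesis
  proof
    show "h0 > 0" unfolding h0_def using \<delta> B\<Gamma> BG B\<phi> E \<epsilon> by auto
    fix h assume h: "0 < h" "h < h0"
    have hB: "h * B\<Gamma> * BG \<le> 1/4"
      using mult_right_mono[of h "1 / (4 * B\<Gamma> * BG)" "B\<Gamma> * BG"] h B\<Gamma> BG
      unfolding h0_def by (simp add: mult.assoc)
    have hE: "2 * (h * B\<Gamma> * B\<phi>) * E \<le> \<epsilon> / 2"
      using mult_right_mono[of h "\<epsilon> / (4 * B\<Gamma> * B\<phi> * E)" "B\<Gamma> * B\<phi> * E"] h B\<Gamma> B\<phi> E
      unfolding h0_def by (simp add: mult_ac)
    show S: "discrete_scheme \<Gamma> T h v F G"
      using discrete_scheme_small_step[OF h(1) B\<Gamma>(2) BG'] hB by simp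
    fix k assume k: "discrete_scheme.grid h k \<le> T"
    have "norm (X (discrete_scheme.grid h k) - discrete_scheme.scheme \<Gamma> h v F G k)
        \<le> 2 * (T * e + h * B\<Gamma> * B\<phi>) * E"
      unfolding E_def
    proof (rule discrete_scheme.scheme_error[OF S X_eq _ B\<Gamma>(2) BG' B\<phi>(2) _ _ _ k])
      show "norm (\<Gamma> t s *\<^sub>R (F s + G s *v X s) - \<Gamma> t s' *\<^sub>R (F s' + G s' *v X s')) \<le> e"
        if "0 \<le> s" "s \<le> t" "t \<le> T" "0 \<le> s'" "s' \<le> t" "\<bar>s - s'\<bar> \<le> h" for t s s'
        using \<delta>(2)[OF that(1-5)] that(6) h unfolding h0_def \<phi>_def by fastforce
    qed (use c\<phi> hB e in \<open>auto simp: \<phi>_def\<close>)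
    also have "\<dots> < \<epsilon>"
      using eE hE \<epsilon> by (simp add: algebra_simps)
    finally show "norm (X (discrete_scheme.grid h k) - discrete_scheme.scheme \<Gamma> h v F G k) < \<epsilon>" .
  qed
qed

text \<open>Compare \<open>X(t\<^sub>0)\<close> with the nonnegative scheme at the grid point just below \<open>t\<^sub>0\<close>.\<close>

lemma cond_P_fixed_point_nonneg:
  assumes t0: "t0 \<in> {0..T}"
  shows "0 \<le> X t0 $ i"
proof -
  have "- \<epsilon> < X t0 $ i" if \<epsilon>: "\<epsilon> > 0" for \<epsilon>
  proof -
    obtain h0 where h0: "h0 > 0" "\<And>h. 0 < h \<Longrightarrow> h < h0 \<Longrightarrow> discrete_scheme \<Gamma> T h v F G"
      "\<And>h k. 0 < h \<Longrightarrow> h < h0 \<Longrightarrow> discrete_scheme.grid h k \<le> T \<Longrightarrow>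
        norm (X (discrete_scheme.grid h k) - discrete_scheme.scheme \<Gamma> h v F G k) < \<epsilon> / 2"
      using scheme_converges[of "\<epsilon> / 2"] \<epsilon> by auto
    obtain \<delta> where \<delta>: "\<delta> > 0"
      "\<And>s s'. s \<in> {0..T} \<Longrightarrow> s' \<in> {0..T} \<Longrightarrow> dist s' s < \<delta> \<Longrightarrow> dist (X s') (X s) < \<epsilon> / 2"
      using compact_uniformly_continuous[OF cX compact_Icc] \<epsilon>
      unfolding uniformly_continuous_on_def by (meson half_gt_zero)
    define h where "h = min h0 \<delta> / 2"
    have h: "0 < h" "h < h0" "h < \<delta>" unfolding h_def using h0(1) \<delta>(1) by auto
    interpret S: discrete_scheme \<Gamma> T h v F G by (rule h0(2)[OF h(1,2)])
    define k where "k = nat \<lfloor>t0 / h\<rfloor>"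
    have k: "S.grid k \<le> t0" "t0 < S.grid k + h"
    proof -
      have "real k = of_int \<lfloor>t0 / h\<rfloor>" unfolding k_def using t0 h by simp
      then have "real k \<le> t0 / h" "t0 / h < real k + 1" by linarith+
      then show "S.grid k \<le> t0" "t0 < S.grid k + h"
        using h unfolding S.grid_def by (simp_all add: pos_le_divide_eq pos_divide_less_eq algebra_simps)
    qed
    have gk: "S.grid k \<in> {0..T}" using k(1) S.grid_nonneg t0 by auto
    have "\<bar>X (S.grid k) $ i - S.scheme k $ i\<bar> < \<epsilon> / 2"
      using h0(3)[OF h(1,2)] gk component_le_norm_cart[of "X (S.grid k) - S.scheme k" i] by force
    moreover have "0 \<le> S.scheme k $ i"
      using S.scheme_nonneg gk by simp
    moreover have "\<bar>X t0 $ i - X (S.grid k) $ i\<bar> < \<epsilon> / 2"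
      using \<delta>(2)[OF gk t0] k h component_le_norm_cart[of "X t0 - X (S.grid k)" i]
      by (simp add: dist_norm dist_real_def)
    ultimately show ?thesis by linarith
  qed
  from this[of "- X t0 $ i"] show ?thesis by (cases "0 \<le> X t0 $ i") auto
qed

end

section \<open>Approximation of the kernel\<close>

locale kernel_approximation =
  fixes \<Gamma> :: "real \<Rightarrow> real \<Rightarrow> real" and \<Gamma>M :: "nat \<Rightarrow> real \<Rightarrow> real \<Rightarrow> real"
    and T \<eta> \<gamma> \<eta>' \<gamma>' :: real
    and v :: "real^'d" and F :: "real \<Rightarrow> real^'d" and G :: "real \<Rightarrow> real^'d^'d"
  assumes lim: "linear_volterra \<Gamma> T \<eta> \<gamma> F G"
    and approx: "\<And>M. linear_volterra (\<Gamma>M M) T \<eta>' \<gamma>' F G"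
    and L2: "\<And>t. t \<in> {0..T} \<Longrightarrow>
      ((\<lambda>M. \<integral>\<^sup>+ s\<in>{0..t}. ennreal ((\<Gamma> t s - \<Gamma>M M t s)\<^sup>2) \<partial>lborel) \<longlongrightarrow> 0) sequentially"
begin

lemma cond_K_lim: "cond_K_on \<Gamma> T \<eta> \<gamma>" and cond_K_approx: "cond_K_on (\<Gamma>M M) T \<eta>' \<gamma>'"
  using lim approx unfolding linear_volterra_def by blast+

context
  fixes \<phi> :: "real \<Rightarrow> 'a::euclidean_space"
  assumes \<phi>: "continuous_on {0..T} \<phi>"
begin

lemma volterra_int_approx_bounded:
  assumes t: "t \<in> {0..T}"
  shows "(norm (volterra_int (\<Gamma>M M) \<phi> t - volterra_int \<Gamma> \<phi> t))\<^sup>2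
    \<le> 2 * (\<eta>' * T powr (2 * \<gamma>') + \<eta> * T powr (2 * \<gamma>)) * integral {0..T} (\<lambda>s. (norm (\<phi> s))\<^sup>2)"
proof -
  let ?I = "\<lambda>t. integral {0..t} (\<lambda>s. (norm (\<phi> s))\<^sup>2)"
  have "?I t \<le> ?I T"
    using t by (intro integral_subset_le integrable_continuous_interval continuous_intros
        continuous_on_subset[OF \<phi>]) auto
  moreover have "(norm (volterra_int (\<Gamma>M M) \<phi> t))\<^sup>2 \<le> \<eta>' * T powr (2 * \<gamma>') * ?I t"
    "(norm (volterra_int \<Gamma> \<phi> t))\<^sup>2 \<le> \<eta> * T powr (2 * \<gamma>) * ?I t"
    using norm_volterra_int_sq_le[OF cond_K_approx \<phi> t] norm_volterra_int_sq_le[OF cond_K_lim \<phi> t] by auto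
  moreover have "0 \<le> \<eta>' * T powr (2 * \<gamma>')" "0 \<le> \<eta> * T powr (2 * \<gamma>)"
    using cond_K_on_pos[OF cond_K_approx] cond_K_on_pos[OF cond_K_lim] by auto
  ultimately have "(norm (volterra_int (\<Gamma>M M) \<phi> t))\<^sup>2 \<le> \<eta>' * T powr (2 * \<gamma>') * ?I T"
    "(norm (volterra_int \<Gamma> \<phi> t))\<^sup>2 \<le> \<eta> * T powr (2 * \<gamma>) * ?I T"
    by (meson mult_left_mono order_trans)+
  then show ?thesis
    using norm_add_sq_le[of "volterra_int (\<Gamma>M M) \<phi> t" "- volterra_int \<Gamma> \<phi> t"]
    by (simp add: algebra_simps)
qed

lemma volterra_int_approx_tendsto:
  assumes t: "t \<in> {0..T}"
  shows "(\<lambda>M. volterra_int (\<Gamma>M M) \<phi> t) \<longlonglongrightarrow> volterra_int \<Gamma> \<phi> t"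
proof -
  define I where "I M = (\<integral>\<^sup>+ s\<in>{0..t}. ennreal ((\<Gamma>M M t s - \<Gamma> t s)\<^sup>2) \<partial>lborel)" for M
  define C where "C = integral {0..t} (\<lambda>s. (norm (\<phi> s))\<^sup>2)"
  have "I \<longlonglongrightarrow> 0" using L2[OF t] unfolding I_def by (simp add: power2_commute)
  have c: "continuous_on {0..t} \<phi>" using t by (intro continuous_on_subset[OF \<phi>]) auto
  have bound: "norm (volterra_int (\<Gamma>M M) \<phi> t - volterra_int \<Gamma> \<phi> t) \<le> sqrt (enn2real (I M) * C)"
    if "I M < 1" for M
  proof -
    have m: "set_borel_measurable lborel {0..t} (\<lambda>s. \<Gamma>M M t s - \<Gamma> t s)"
      using t by (intro set_borel_measurable_diff cond_K_on_measurable[OF cond_K_approx] cond_K_on_measurable[OF cond_K_lim]) auto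
    have "I M \<noteq> \<infinity>" using that by auto
    then have "I M \<le> ennreal (enn2real (I M))" by (simp add: ennreal_enn2real_if)
    then have "(norm (LINT s:{0..t}|lborel. (\<Gamma>M M t s - \<Gamma> t s) *\<^sub>R \<phi> s))\<^sup>2 \<le> enn2real (I M) * C"
      unfolding C_def by (intro kernel_Cauchy_Schwarz(2)[OF m c]) (simp_all add: I_def)
    moreover have "(LINT s:{0..t}|lborel. (\<Gamma>M M t s - \<Gamma> t s) *\<^sub>R \<phi> s)
        = volterra_int (\<Gamma>M M) \<phi> t - volterra_int \<Gamma> \<phi> t"
      unfolding volterra_int_def
      by (subst set_integral_diff(2)[OF set_integrable_volterra[OF cond_K_approx \<phi> t] set_integrable_volterra[OF cond_K_lim \<phi> t],
            symmetric]) (simp add: scaleR_diff_left)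
    ultimately show ?thesis by (simp add: real_le_rsqrt)
  qed
  have "I \<longlonglongrightarrow> ennreal 0" using \<open>I \<longlonglongrightarrow> 0\<close> by simp
  then have "(\<lambda>M. sqrt (enn2real (I M) * C)) \<longlonglongrightarrow> sqrt (0 * C)"
    by (intro tendsto_intros order_refl)
  then have lim0: "(\<lambda>M. sqrt (enn2real (I M) * C)) \<longlonglongrightarrow> 0" by simp
  have "(\<lambda>M. norm (volterra_int (\<Gamma>M M) \<phi> t - volterra_int \<Gamma> \<phi> t)) \<longlonglongrightarrow> 0"
  proof (rule tendsto_sandwich[OF _ _ tendsto_const lim0])
    show "\<forall>\<^sub>F M in sequentially. norm (volterra_int (\<Gamma>M M) \<phi> t - volterra_int \<Gamma> \<phi> t)
        \<le> sqrt (enn2real (I M) * C)"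
      using order_tendstoD(2)[OF \<open>I \<longlonglongrightarrow> 0\<close> zero_less_one] by (rule eventually_mono) (rule bound)
  qed simp
  then show ?thesis
    by (simp add: LIM_zero_cancel tendsto_norm_zero_iff)
qed


lemma volterra_int_approx_sq_tendsto:
  assumes t: "t \<in> {0..T}"
  shows "(\<lambda>M. (norm (volterra_int (\<Gamma>M M) \<phi> t - volterra_int \<Gamma> \<phi> t))\<^sup>2) \<longlonglongrightarrow> 0"
  using tendsto_power[OF tendsto_norm[OF LIM_zero[OF volterra_int_approx_tendsto[OF t]]], of 2]
  by simp

end

lemma integral_volterra_int_approx_tendsto:
  fixes \<phi> :: "real \<Rightarrow> 'a::euclidean_space"
  assumes \<phi>: "continuous_on {0..T} \<phi>"
  shows "(\<lambda>M. integral {0..T} (\<lambda>t. (norm (volterra_int (\<Gamma>M M) \<phi> t - volterra_int \<Gamma> \<phi> t))\<^sup>2)) \<longlonglongrightarrow> 0"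
proof -
  let ?\<alpha> = "\<lambda>M t. (norm (volterra_int (\<Gamma>M M) \<phi> t - volterra_int \<Gamma> \<phi> t))\<^sup>2"
  let ?B = "2 * (\<eta>' * T powr (2 * \<gamma>') + \<eta> * T powr (2 * \<gamma>)) * integral {0..T} (\<lambda>s. (norm (\<phi> s))\<^sup>2)"
  have "(\<lambda>M. integral {0..T} (?\<alpha> M)) \<longlonglongrightarrow> integral {0..T} (\<lambda>_. 0::real)"
  proof (rule dominated_convergence(2)[where h = "\<lambda>_. ?B"])
    show "?\<alpha> M integrable_on {0..T}" for M
      by (intro integrable_continuous_interval continuous_intros continuous_on_volterra_int[OF cond_K_approx \<phi>]
          continuous_on_volterra_int[OF cond_K_lim \<phi>])
    show "norm (?\<alpha> M t) \<le> ?B" if "t \<in> {0..T}" for M t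
      using volterra_int_approx_bounded[OF \<phi> that] by simp
    show "(\<lambda>M. ?\<alpha> M t) \<longlonglongrightarrow> 0" if "t \<in> {0..T}" for t
      by (rule volterra_int_approx_sq_tendsto[OF \<phi> that])
  qed auto
  then show ?thesis by simp
qed

lemma approx_error_sq_le:
  assumes cY: "continuous_on {0..T} Y" and Y: "\<And>t. t \<in> {0..T} \<Longrightarrow> Y t = volterra_map \<Gamma> v F G Y t"
    and cYM: "\<And>M. continuous_on {0..T} (YM M)"
    and YM: "\<And>M t. t \<in> {0..T} \<Longrightarrow> YM M t = volterra_map (\<Gamma>M M) v F G (YM M) t"
    and B: "\<And>s. s \<in> {0..T} \<Longrightarrow> abs_entry_sum (G s) \<le> B" and s: "s \<in> {0..T}"
  defines "\<phi> \<equiv> \<lambda>s. F s + G s *v Y s"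
  shows "(norm (YM M s - Y s))\<^sup>2 \<le> 2 * (norm (volterra_int (\<Gamma>M M) \<phi> s - volterra_int \<Gamma> \<phi> s))\<^sup>2
    + 2 * (\<eta>' * T powr (2 * \<gamma>') * B\<^sup>2) * integral {0..s} (\<lambda>r. (norm (YM M r - Y r))\<^sup>2)"
proof -
  have "YM M s - Y s = volterra_map (\<Gamma>M M) v F G (YM M) s - volterra_map \<Gamma> v F G Y s"
    by (rule arg_cong2[where f = minus, OF YM[OF s] Y[OF s]])
  also have "\<dots> = (volterra_map (\<Gamma>M M) v F G (YM M) s - volterra_map (\<Gamma>M M) v F G Y s)
      + (volterra_int (\<Gamma>M M) \<phi> s - volterra_int \<Gamma> \<phi> s)"
    unfolding volterra_map_def \<phi>_def by simp
  finally have "(norm (YM M s - Y s))\<^sup>2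
      \<le> 2 * (norm (volterra_map (\<Gamma>M M) v F G (YM M) s - volterra_map (\<Gamma>M M) v F G Y s))\<^sup>2
        + 2 * (norm (volterra_int (\<Gamma>M M) \<phi> s - volterra_int \<Gamma> \<phi> s))\<^sup>2"
    by (metis norm_add_sq_le)
  moreover have "(norm (volterra_map (\<Gamma>M M) v F G (YM M) s - volterra_map (\<Gamma>M M) v F G Y s))\<^sup>2
      \<le> \<eta>' * T powr (2 * \<gamma>') * B\<^sup>2 * integral {0..s} (\<lambda>r. (norm (YM M r - Y r))\<^sup>2)"
    by (rule linear_volterra.volterra_map_diff_sq_le[OF approx cYM cY s B])
  ultimately show ?thesis by linarith
qed

text \<open>Gronwall's inequality for \<open>|Y\<^sub>M - Y|\<^sup>2\<close>, whose forcing term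
  \<open>\<alpha>\<^sub>M(t) = |\<Phi>\<^sub>M(Y)(t) - \<Phi>(Y)(t)|\<^sup>2\<close> tends to \<open>0\<close> pointwise and in \<open>L\<^sup>1\<close>.\<close>

lemma approx_fixed_point_tendsto:
  assumes cY: "continuous_on {0..T} Y" and Y: "\<And>t. t \<in> {0..T} \<Longrightarrow> Y t = volterra_map \<Gamma> v F G Y t"
    and cYM: "\<And>M. continuous_on {0..T} (YM M)"
    and YM: "\<And>M t. t \<in> {0..T} \<Longrightarrow> YM M t = volterra_map (\<Gamma>M M) v F G (YM M) t"
    and t: "t \<in> {0..T}"
  shows "(\<lambda>M. YM M t) \<longlonglongrightarrow> Y t"
proof -
  define \<phi> where "\<phi> s = F s + G s *v Y s" for s
  have c\<phi>: "continuous_on {0..T} \<phi>"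
    unfolding \<phi>_def by (rule linear_volterra.continuous_on_forcing[OF lim cY])
  define \<alpha> where "\<alpha> M t = (norm (volterra_int (\<Gamma>M M) \<phi> t - volterra_int \<Gamma> \<phi> t))\<^sup>2" for M t
  have c\<alpha>: "continuous_on {0..T} (\<alpha> M)" for M
    unfolding \<alpha>_def by (intro continuous_intros continuous_on_volterra_int[OF cond_K_approx c\<phi>]
        continuous_on_volterra_int[OF cond_K_lim c\<phi>])
  obtain B where B: "\<And>s. s \<in> {0..T} \<Longrightarrow> abs_entry_sum (G s) \<le> B"
    using linear_volterra.G_bounded[OF lim] by blast
  define L where "L = \<eta>' * T powr (2 * \<gamma>') * B\<^sup>2"
  have L: "0 \<le> L" using cond_K_on_pos[OF cond_K_approx] unfolding L_def by simp
  define u where "u M t = (norm (YM M t - Y t))\<^sup>2" for M t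
  have step: "u M s \<le> 2 * \<alpha> M s + 2 * L * integral {0..s} (u M)" if "s \<in> {0..T}" for M s
    using approx_error_sq_le[OF cY Y cYM YM B that] unfolding u_def \<alpha>_def \<phi>_def L_def by simp
  define A where "A M = integral {0..T} (\<alpha> M)" for M
  have "u M t \<le> 2 * \<alpha> M t + 2 * L * (integral {0..T} (\<lambda>s. 2 * \<alpha> M s) * exp (2 * L * T))" for M
    using L unfolding u_def
    by (intro gronwall_integral_variable[OF _ _ _ _ step[unfolded u_def] t])
       (auto simp: \<alpha>_def intro!: continuous_intros cYM cY c\<alpha>[unfolded \<alpha>_def])
  then have u_le: "u M t \<le> 2 * \<alpha> M t + 4 * L * exp (2 * L * T) * A M" for M
    unfolding A_def by (simp add: algebra_simps)
  have "(\<lambda>M. \<alpha> M t) \<longlonglongrightarrow> 0"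
    unfolding \<alpha>_def by (rule volterra_int_approx_sq_tendsto[OF c\<phi> t])
  moreover have "A \<longlonglongrightarrow> 0"
    unfolding A_def \<alpha>_def by (rule integral_volterra_int_approx_tendsto[OF c\<phi>])
  ultimately have "(\<lambda>M. 2 * \<alpha> M t + 4 * L * exp (2 * L * T) * A M) \<longlonglongrightarrow> 2 * 0 + 4 * L * exp (2 * L * T) * 0"
    by (intro tendsto_intros)
  then have lim: "(\<lambda>M. 2 * \<alpha> M t + 4 * L * exp (2 * L * T) * A M) \<longlonglongrightarrow> 0"
    by simp
  have "(\<lambda>M. u M t) \<longlonglongrightarrow> 0"
  proof (rule tendsto_sandwich[OF _ _ tendsto_const lim])
    show "\<forall>\<^sub>F M in sequentially. 0 \<le> u M t" by (simp add: u_def)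
    show "\<forall>\<^sub>F M in sequentially. u M t \<le> 2 * \<alpha> M t + 4 * L * exp (2 * L * T) * A M"
      using u_le by (intro always_eventually) blast
  qed
  then have "(\<lambda>M. sqrt (u M t)) \<longlonglongrightarrow> sqrt 0"
    by (rule tendsto_real_sqrt)
  then have "(\<lambda>M. norm (YM M t - Y t)) \<longlonglongrightarrow> 0"
    by (simp add: u_def)
  then show ?thesis
    by (simp add: LIM_zero_cancel tendsto_norm_zero_iff)
qed

end

lemma assumption_A_E:
  assumes "assumption_A \<Gamma>"
  obtains \<eta> \<gamma> and \<Gamma>M :: "nat \<Rightarrow> real \<Rightarrow> real \<Rightarrow> real" and \<eta>' \<gamma>'
  where "cond_K_on \<Gamma> T \<eta> \<gamma>" and "\<And>M. cond_P (\<Gamma>M M)" and "\<And>M. cond_K_on (\<Gamma>M M) T \<eta>' \<gamma>'"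
    and "\<And>t. t \<in> {0..T} \<Longrightarrow>
      ((\<lambda>M. \<integral>\<^sup>+ s\<in>{0..t}. ennreal ((\<Gamma> t s - \<Gamma>M M t s)\<^sup>2) \<partial>lborel) \<longlongrightarrow> 0) sequentially"
proof -
  note A = assms[unfolded assumption_A_def]
  obtain \<eta> \<gamma> where "\<eta> > 0" "\<gamma> > 0" "\<forall>s t. 0 \<le> s \<and> s \<le> t \<and> t \<le> T \<longrightarrow>
         (\<integral>\<^sup>+ u\<in>{s..t}. ennreal ((\<Gamma> t u)\<^sup>2) \<partial>lborel)
       + (\<integral>\<^sup>+ u\<in>{0..s}. ennreal ((\<Gamma> t u - \<Gamma> s u)\<^sup>2) \<partial>lborel)
         \<le> ennreal (\<eta> * (t - s) powr (2 * \<gamma>))"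
    using A unfolding cond_K_def by meson
  then have K\<Gamma>: "cond_K_on \<Gamma> T \<eta> \<gamma>"
    using A unfolding cond_K_on_def by auto
  obtain \<Gamma>M :: "nat \<Rightarrow> real \<Rightarrow> real \<Rightarrow> real" where
    P: "\<forall>M. cond_P (\<Gamma>M M)" and
    L2: "\<forall>t\<ge>0. ((\<lambda>M. \<integral>\<^sup>+ s\<in>{0..t}. ennreal ((\<Gamma> t s - \<Gamma>M M t s)\<^sup>2) \<partial>lborel) \<longlongrightarrow> 0) sequentially" and
    KM: "\<forall>T. \<exists>\<eta>::real. \<exists>\<gamma>::real. \<eta> > 0 \<and> 0 < \<gamma> \<and> \<gamma> \<le> 1/2 \<and>
         (\<forall>M s t. 0 \<le> s \<and> s \<le> t \<and> t \<le> T \<longrightarrow>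
            (\<integral>\<^sup>+ u\<in>{s..t}. ennreal ((\<Gamma>M M t u)\<^sup>2) \<partial>lborel)
          + (\<integral>\<^sup>+ u\<in>{0..s}. ennreal ((\<Gamma>M M t u - \<Gamma>M M s u)\<^sup>2) \<partial>lborel)
            \<le> ennreal (\<eta> * \<bar>t - s\<bar> powr (2 * \<gamma>)))"
    using A by blast
  obtain \<eta>' \<gamma>' where K: "\<eta>' > 0" "\<gamma>' > 0"
    "\<forall>M s t. 0 \<le> s \<and> s \<le> t \<and> t \<le> T \<longrightarrow>
            (\<integral>\<^sup>+ u\<in>{s..t}. ennreal ((\<Gamma>M M t u)\<^sup>2) \<partial>lborel)
          + (\<integral>\<^sup>+ u\<in>{0..s}. ennreal ((\<Gamma>M M t u - \<Gamma>M M s u)\<^sup>2) \<partial>lborel)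
            \<le> ennreal (\<eta>' * \<bar>t - s\<bar> powr (2 * \<gamma>'))"
    using KM by meson
  show ?thesis
  proof (rule that[OF K\<Gamma>])
    show "cond_P (\<Gamma>M M)" for M using P by blast
    show "cond_K_on (\<Gamma>M M) T \<eta>' \<gamma>'" for M
      unfolding cond_K_on_def using K cond_P_measurable P by auto
    show "((\<lambda>M. \<integral>\<^sup>+ s\<in>{0..t}. ennreal ((\<Gamma> t s - \<Gamma>M M t s)\<^sup>2) \<partial>lborel) \<longlongrightarrow> 0) sequentially"
      if "t \<in> {0..T}" for t
      using L2 that by auto
  qed
qed

context kernel_approximation
begin

lemma fixed_point_nonneg:
  assumes P: "\<And>M. cond_P (\<Gamma>M M)" and T: "T > 0"
    and v: "\<And>i. 0 \<le> v $ i" and F: "\<And>t i. t \<in> {0..T} \<Longrightarrow> 0 \<le> F t $ i"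
    and G: "\<And>t i j. t \<in> {0..T} \<Longrightarrow> i \<noteq> j \<Longrightarrow> 0 \<le> G t $ i $ j"
    and cY: "continuous_on {0..T} Y" and Y: "\<And>t. t \<in> {0..T} \<Longrightarrow> Y t = volterra_map \<Gamma> v F G Y t"
    and t: "t \<in> {0..T}"
  shows "0 \<le> Y t $ i"
proof -
  have "\<forall>M. \<exists>Z. continuous_on {0..T} Z \<and> (\<forall>t\<in>{0..T}. Z t = volterra_map (\<Gamma>M M) v F G Z t)"
  proof
    fix M
    obtain Z where "continuous_on {0..T} Z" "\<And>t. t \<in> {0..T} \<Longrightarrow> Z t = volterra_map (\<Gamma>M M) v F G Z t"
      using linear_volterra.fixed_point_exists[OF approx[of M], where v = v] by blast
    then show "\<exists>Z. continuous_on {0..T} Z \<and> (\<forall>t\<in>{0..T}. Z t = volterra_map (\<Gamma>M M) v F G Z t)"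
      by blast
  qed
  then obtain YM where "\<forall>M. continuous_on {0..T} (YM M) \<and> (\<forall>t\<in>{0..T}. YM M t = volterra_map (\<Gamma>M M) v F G (YM M) t)"
    by (rule choice[THEN exE])
  then have cYM: "\<And>M. continuous_on {0..T} (YM M)"
    and YM: "\<And>M t. t \<in> {0..T} \<Longrightarrow> YM M t = volterra_map (\<Gamma>M M) v F G (YM M) t"
    by blast+
  have "(\<lambda>M. YM M t $ i) \<longlonglongrightarrow> Y t $ i"
    by (intro tendsto_vec_nth approx_fixed_point_tendsto[OF cY Y cYM YM t])
  moreover have "0 \<le> YM M t $ i" for M
    using linear_volterra.cF[OF approx] linear_volterra.cG[OF approx]
    by (intro cond_P_fixed_point_nonneg[OF P T _ _ v F G cYM YM t]) auto
  ultimately show ?thesis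
    by (intro LIMSEQ_le_const[of "\<lambda>M. YM M t $ i"]) auto
qed


lemma volterra_solution_nonneg:
  assumes P: "\<And>M. cond_P (\<Gamma>M M)" and T: "T > 0"
    and v: "\<forall>i. 0 \<le> v $ i" and F: "\<forall>t\<in>{0..T}. \<forall>i. 0 \<le> F t $ i"
    and G: "\<forall>t\<in>{0..T}. \<forall>i j. i \<noteq> j \<longrightarrow> 0 \<le> G t $ i $ j"
    and X: "continuous_on {0..T} X" "volterra_solution \<Gamma> v F G T X" and t: "t \<in> {0..T}"
  shows "0 \<le> X t $ i"
proof (rule fixed_point_nonneg[OF P T _ _ _ X(1) _ t])
  show "\<And>t. t \<in> {0..T} \<Longrightarrow> X t = volterra_map \<Gamma> v F G X t"
    using X linear_volterra.volterra_solution_iff_fixed_point[OF lim] by blast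
qed (use v F G in auto)

end

theorem lemmaL:
  fixes \<Gamma> :: "real \<Rightarrow> real \<Rightarrow> real" and T :: real
    and v :: "real^'d" and F :: "real \<Rightarrow> real^'d" and G :: "real \<Rightarrow> real^'d^'d"
  assumes "assumption_A \<Gamma>" and "T > 0"
    and "continuous_on {0..T} F" and "continuous_on {0..T} G"
    and "\<forall>i. 0 \<le> v $ i"
    and "\<forall>t\<in>{0..T}. \<forall>i. 0 \<le> F t $ i"
    and "\<forall>t\<in>{0..T}. \<forall>i j. i \<noteq> j \<longrightarrow> 0 \<le> G t $ i $ j"
  shows "(\<exists>X. continuous_on {0..T} X \<and> volterra_solution \<Gamma> v F G T X) \<and>
         (\<forall>X1 X2. continuous_on {0..T} X1 \<and> volterra_solution \<Gamma> v F G T X1 \<and>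
                  continuous_on {0..T} X2 \<and> volterra_solution \<Gamma> v F G T X2
                  \<longrightarrow> (\<forall>t\<in>{0..T}. X1 t = X2 t)) \<and>
         (\<forall>X. continuous_on {0..T} X \<and> volterra_solution \<Gamma> v F G T X
              \<longrightarrow> (\<forall>t\<in>{0..T}. \<forall>i. 0 \<le> X t $ i))"
proof -
  obtain \<eta> \<gamma> and \<Gamma>M :: "nat \<Rightarrow> real \<Rightarrow> real \<Rightarrow> real" and \<eta>' \<gamma>'
    where K: "cond_K_on \<Gamma> T \<eta> \<gamma>" and P: "\<And>M. cond_P (\<Gamma>M M)" and KM: "\<And>M. cond_K_on (\<Gamma>M M) T \<eta>' \<gamma>'"
      and L2: "\<And>t. t \<in> {0..T} \<Longrightarrow>
        ((\<lambda>M. \<integral>\<^sup>+ s\<in>{0..t}. ennreal ((\<Gamma> t s - \<Gamma>M M t s)\<^sup>2) \<partial>lborel) \<longlongrightarrow> 0) sequentially"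
    by (rule assumption_A_E[OF assms(1), where T = T]) blast
  have lin: "linear_volterra \<Gamma> T \<eta> \<gamma> F G" and linM: "\<And>M. linear_volterra (\<Gamma>M M) T \<eta>' \<gamma>' F G"
    using K KM assms(2-4) by (simp_all add: linear_volterra_def)
  interpret linear_volterra \<Gamma> T \<eta> \<gamma> v F G by (rule lin)
  interpret kernel_approximation \<Gamma> \<Gamma>M T \<eta> \<gamma> \<eta>' \<gamma>' v F G
    by (rule kernel_approximation.intro[OF lin linM L2])
  show ?thesis
    using volterra_solution_exists volterra_solution_unique
      volterra_solution_nonneg[OF P assms(2) assms(5-7)] by blast
qed

end
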